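(* Let $k\ge 3$ and let $N_k^{gr}$ denote the algebra $N_k=\mathrm{span}\{I_k,E,E^2,\dots,E^{k-2},e_{12},\dots,e_{1k}\}\subseteq UT_k(F)$, $E=\sum_{i=1}^{k-1}e_{i,i+1}$, with the elementary grading induced by $(0,1,\dots,1)\in\mathbb{Z}_2^k$. Then $$C^{gr}(N_k^{gr})=\mathrm{Id}^{gr}(N_{k-1}^{gr})=\langle [y_1,y_2],\ [z,y_1,\dots,y_{k-2}],\ z_1z_2\rangle_{T_2}.$$
   Context: $F$ is a field of characteristic zero, $UT_k(F)$ the upper triangular $k\times k$ matrices with matrix units $e_{ij}$, $I_k$ the identity matrix. The elementary grading induced by $(g_1,\dots,g_k)$ makes $e_{ij}$ homogeneous of degree $g_j-g_i\in\mathbb{Z}_2$. A superalgebra is an algebra $A=A_0\oplus A_1$ with $A_iA_j\subseteq A_{i+j\bmod 2}$; $Z(A)$ is the center. $F\langle Y,Z\rangle$ is the free algebra on even variables $Y=\{y_1,y_2,\dots\}$ and odd variables $Z=\{z,z_1,z_2,\dots\}$. $\mathrm{Id}^{gr}(A)$ is the set of graded identities; $C^{gr}(A)$ the set of central graded polynomials (zero constant term, all evaluations with even variables in $A_0$ and odd in $A_1$ lie in $Z(A)$). $\langle S\rangle_{T_2}$ is the smallest ideal containing $S$ invariant under grading-preserving endomorphisms. Commutators are left-normed: $[a,b]=ab-ba$, $[a_1,\dots,a_m]=[[a_1,\dots,a_{m-1}],a_m]$. *)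

theory Defs
  imports Main
begin

text \<open>Variables: Yv i is the even variable y_i (i >= 1 used), Zv 0 is z, Zv i is z_i.\<close>
datatype var = Yv nat | Zv nat

text \<open>Noncommutative polynomials: finitely supported coefficient functions on words.\<close>
type_synonym 'a fpoly = "var list \<Rightarrow> 'a"

definition fsupp :: "'a::zero fpoly \<Rightarrow> var list set" where
  "fsupp p = {w. p w \<noteq> 0}"

definition fpolys :: "'a::zero fpoly set" where
  "fpolys = {p. finite (fsupp p)}"

definition fzero :: "'a::zero fpoly" where "fzero = (\<lambda>w. 0)"
definition fone :: "'a::{zero,one} fpoly" where "fone = (\<lambda>w. if w = [] then 1 else 0)"
definition fvar :: "var \<Rightarrow> 'a::{zero,one} fpoly" where
  "fvar x = (\<lambda>w. if w = [x] then 1 else 0)"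
definition fadd :: "'a::plus fpoly \<Rightarrow> 'a fpoly \<Rightarrow> 'a fpoly" where
  "fadd p q = (\<lambda>w. p w + q w)"
definition fsub :: "'a::minus fpoly \<Rightarrow> 'a fpoly \<Rightarrow> 'a fpoly" where
  "fsub p q = (\<lambda>w. p w - q w)"
definition fsmult :: "'a::times \<Rightarrow> 'a fpoly \<Rightarrow> 'a fpoly" where
  "fsmult c p = (\<lambda>w. c * p w)"
definition fmul :: "'a::comm_semiring_1 fpoly \<Rightarrow> 'a fpoly \<Rightarrow> 'a fpoly" where
  "fmul p q = (\<lambda>w. \<Sum>i\<le>length w. p (take i w) * q (drop i w))"

definition fcomm :: "'a::comm_ring_1 fpoly \<Rightarrow> 'a fpoly \<Rightarrow> 'a fpoly" where
  "fcomm p q = fsub (fmul p q) (fmul q p)"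

definition fcomm_list :: "'a::comm_ring_1 fpoly \<Rightarrow> 'a fpoly list \<Rightarrow> 'a fpoly" where
  "fcomm_list a as = foldl fcomm a as"

definition is_odd_var :: "var \<Rightarrow> bool" where
  "is_odd_var x = (case x of Yv _ \<Rightarrow> False | Zv _ \<Rightarrow> True)"

definition word_odd :: "var list \<Rightarrow> bool" where
  "word_odd w = odd (length (filter is_odd_var w))"

definition even_fpoly :: "'a::zero fpoly \<Rightarrow> bool" where
  "even_fpoly p = (\<forall>w. p w \<noteq> 0 \<longrightarrow> \<not> word_odd w)"
definition odd_fpoly :: "'a::zero fpoly \<Rightarrow> bool" where
  "odd_fpoly p = (\<forall>w. p w \<noteq> 0 \<longrightarrow> word_odd w)"

fun subst_word :: "(var \<Rightarrow> 'a::comm_semiring_1 fpoly) \<Rightarrow> var list \<Rightarrow> 'a fpoly" where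
  "subst_word \<sigma> [] = fone"
| "subst_word \<sigma> (x # w) = fmul (\<sigma> x) (subst_word \<sigma> w)"

definition fsubst :: "(var \<Rightarrow> 'a::comm_semiring_1 fpoly) \<Rightarrow> 'a fpoly \<Rightarrow> 'a fpoly" where
  "fsubst \<sigma> p = (\<lambda>u. \<Sum>w\<in>fsupp p. p w * subst_word \<sigma> w u)"

definition graded_subst :: "(var \<Rightarrow> 'a::comm_semiring_1 fpoly) \<Rightarrow> bool" where
  "graded_subst \<sigma> = (\<forall>x. \<sigma> x \<in> fpolys \<and>
      (if is_odd_var x then odd_fpoly (\<sigma> x) else even_fpoly (\<sigma> x)))"

definition T2_closed :: "'a::comm_ring_1 fpoly set \<Rightarrow> bool" where
  "T2_closed I = (I \<subseteq> fpolys \<and> fzero \<in> I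
     \<and> (\<forall>p\<in>I. \<forall>q\<in>I. fadd p q \<in> I)
     \<and> (\<forall>c. \<forall>p\<in>I. fsmult c p \<in> I)
     \<and> (\<forall>p\<in>I. \<forall>q\<in>fpolys. fmul q p \<in> I \<and> fmul p q \<in> I)
     \<and> (\<forall>\<sigma>. graded_subst \<sigma> \<longrightarrow> (\<forall>p\<in>I. fsubst \<sigma> p \<in> I)))"

definition T2_ideal :: "'a::comm_ring_1 fpoly set \<Rightarrow> 'a fpoly set" where
  "T2_ideal S = \<Inter>{I. S \<subseteq> I \<and> T2_closed I}"

section \<open>k x k matrices (indices 0..k-1) and the superalgebra N_k\<close>

type_synonym 'a mat = "nat \<Rightarrow> nat \<Rightarrow> 'a"

definition mmul :: "nat \<Rightarrow> 'a::comm_semiring_1 mat \<Rightarrow> 'a mat \<Rightarrow> 'a mat" where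
  "mmul k A B = (\<lambda>i j. if i < k \<and> j < k then (\<Sum>l<k. A i l * B l j) else 0)"

definition midt :: "nat \<Rightarrow> 'a::comm_semiring_1 mat" where
  "midt k = (\<lambda>i j. if i = j \<and> i < k then 1 else 0)"

text \<open>Matrix unit e_{i+1,j+1} (0-indexed).\<close>
definition munit :: "nat \<Rightarrow> nat \<Rightarrow> nat \<Rightarrow> 'a::comm_semiring_1 mat" where
  "munit k a b = (\<lambda>i j. if i = a \<and> j = b \<and> a < k \<and> b < k then 1 else 0)"

definition Emat :: "nat \<Rightarrow> 'a::comm_semiring_1 mat" where
  "Emat k = (\<lambda>i j. if j = Suc i \<and> j < k then 1 else 0)"

fun mpow :: "nat \<Rightarrow> 'a::comm_semiring_1 mat \<Rightarrow> nat \<Rightarrow> 'a mat" where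
  "mpow k A 0 = midt k"
| "mpow k A (Suc m) = mmul k A (mpow k A m)"

definition Nalg :: "nat \<Rightarrow> 'a::comm_semiring_1 mat set" where
  "Nalg k = {M. \<exists>a b. M = (\<lambda>i j. (\<Sum>m\<le>k-2. a m * mpow k (Emat k) m i j)
                              + (\<Sum>c\<in>{1..<k}. b c * munit k 0 c i j))}"

text \<open>Elementary grading induced by (0,1,...,1): position (i,j) (0-indexed) has
  degree g_j - g_i where g_0 = 0 and g_i = 1 for i >= 1.\<close>
definition even_pos :: "nat \<Rightarrow> nat \<Rightarrow> bool" where
  "even_pos i j = ((i = 0) = (j = 0))"

definition Neven :: "nat \<Rightarrow> 'a::comm_semiring_1 mat set" where
  "Neven k = {M \<in> Nalg k. \<forall>i j. \<not> even_pos i j \<longrightarrow> M i j = 0}"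
definition Nodd :: "nat \<Rightarrow> 'a::comm_semiring_1 mat set" where
  "Nodd k = {M \<in> Nalg k. \<forall>i j. even_pos i j \<longrightarrow> M i j = 0}"

definition Ncenter :: "nat \<Rightarrow> 'a::comm_semiring_1 mat set" where
  "Ncenter k = {C \<in> Nalg k. \<forall>A\<in>Nalg k. mmul k C A = mmul k A C}"

fun meval_word :: "nat \<Rightarrow> (var \<Rightarrow> 'a::comm_semiring_1 mat) \<Rightarrow> var list \<Rightarrow> 'a mat" where
  "meval_word k \<phi> [] = midt k"
| "meval_word k \<phi> (x # w) = mmul k (\<phi> x) (meval_word k \<phi> w)"

definition meval :: "nat \<Rightarrow> (var \<Rightarrow> 'a::comm_semiring_1 mat) \<Rightarrow> 'a fpoly \<Rightarrow> 'a mat" where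
  "meval k \<phi> p = (\<lambda>i j. \<Sum>w\<in>fsupp p. p w * meval_word k \<phi> w i j)"

definition graded_eval :: "nat \<Rightarrow> (var \<Rightarrow> 'a::comm_semiring_1 mat) \<Rightarrow> bool" where
  "graded_eval k \<phi> = (\<forall>i. \<phi> (Yv i) \<in> Neven k \<and> \<phi> (Zv i) \<in> Nodd k)"

definition IdN :: "nat \<Rightarrow> 'a::comm_semiring_1 fpoly set" where
  "IdN k = {p \<in> fpolys. \<forall>\<phi>. graded_eval k \<phi> \<longrightarrow> meval k \<phi> p = (\<lambda>i j. 0)}"

definition CN :: "nat \<Rightarrow> 'a::comm_semiring_1 fpoly set" where
  "CN k = {p \<in> fpolys. p [] = 0 \<and> (\<forall>\<phi>. graded_eval k \<phi> \<longrightarrow> meval k \<phi> p \<in> Ncenter k)}"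

end

(*
  An even element of N_m is P(0) e_11 + P(E') and an odd one is e_12 Q(E'), where E' is the
  nilpotent shift on the last m - 1 coordinates and P, Q are polynomials; products of graded
  elements are therefore products of polynomials truncated in degree m - 2.  Hence even
  elements commute, odd elements multiply to zero, and commuting an odd element with an even
  one multiplies its Q by a polynomial without constant term, so [z, y_1, ..., y_(k-2)]
  evaluates to e_12 E'^(k-2) R(E'): zero in N_(k-1) and a multiple of the central e_1k in N_k.
  So the T_2-ideal T of the three generators consists of graded identities of N_(k-1) and of
  central polynomials of N_k.

  Conversely, modulo T every monomial is a combination of normal forms y^mu and
  y^mu [z_j, y^nu] with |nu| < k - 2.  Evaluating a graded identity of N_(k-1), or a central
  polynomial of N_k, at suitable generic graded matrices turns its normal-form coefficients
  into the coefficients of a vanishing polynomial function over a field of characteristic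
  zero, so they all vanish and the polynomial lies in T.
*)
theory Submission
  imports Defs "HOL-Library.Function_Algebras" "HOL-Computational_Algebra.Polynomial"
    "HOL-Library.Multiset"
begin

section \<open>The free algebra\<close>

definition fmonom :: "var list \<Rightarrow> 'a::{zero,one} fpoly" where
  "fmonom w = (\<lambda>u. if u = w then 1 else 0)"

lemma sum_fun_apply: "(\<Sum>i\<in>A. f i) x = (\<Sum>i\<in>A. f i x)"
  by (induction A rule: infinite_finite_induct) auto

lemma sum_list_fun_apply: "sum_list (map f xs) x = sum_list (map (\<lambda>i. f i x) xs)"
  by (induction xs) auto

lemma fadd_eq_plus: "fadd p q = p + q"
  by (auto simp: fadd_def)

lemma fsub_eq_minus: "fsub p q = p - q"
  by (auto simp: fsub_def)

lemma fzero_eq_0: "fzero = 0"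
  by (auto simp: fzero_def)

lemma fone_eq_fmonom: "fone = fmonom []"
  by (auto simp: fone_def fmonom_def)

lemma fvar_eq_fmonom: "fvar x = fmonom [x]"
  by (auto simp: fvar_def fmonom_def)

lemma fcomm_eq: "fcomm p q = fmul p q - fmul q p"
  by (simp add: fcomm_def fsub_eq_minus)

lemma fmul_Nil: "fmul p q [] = p [] * q []"
  by (simp add: fmul_def)

lemma fmul_Cons: "fmul p q (a # w) = p [] * q (a # w) + fmul (\<lambda>u. p (a # u)) q w"
proof -
  have "fmul p q (a # w) = (\<Sum>i\<le>Suc (length w). p (take i (a # w)) * q (drop i (a # w)))"
    by (simp add: fmul_def)
  also have "\<dots> = p [] * q (a # w)
      + (\<Sum>i\<le>length w. p (take (Suc i) (a # w)) * q (drop (Suc i) (a # w)))"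
    by (subst sum.atMost_Suc_shift) simp
  finally show ?thesis
    by (simp add: fmul_def)
qed

lemma fmul_add_left:
  "fmul (p + p') q = fmul p q + fmul p' q"
  "fmul (\<lambda>w. p w + p' w) q = (\<lambda>w. fmul p q w + fmul p' q w)"
  by (rule ext, simp add: fmul_def sum.distrib algebra_simps)+

lemma fmul_add_right:
  "fmul q (p + p') = fmul q p + fmul q p'"
  "fmul q (\<lambda>w. p w + p' w) = (\<lambda>w. fmul q p w + fmul q p' w)"
  by (rule ext, simp add: fmul_def sum.distrib algebra_simps)+

lemma fmul_diff_left: "fmul (p - p') (q :: 'a::comm_ring_1 fpoly) = fmul p q - fmul p' q"
  by (rule ext) (simp add: fmul_def sum_subtractf algebra_simps)

lemma fmul_diff_right: "fmul (q :: 'a::comm_ring_1 fpoly) (p - p') = fmul q p - fmul q p'"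
  by (rule ext) (simp add: fmul_def sum_subtractf algebra_simps)

lemma fmul_zero_left [simp]: "fmul 0 q = 0" "fmul (\<lambda>w. 0) q = (\<lambda>w. 0)"
  by (rule ext, simp add: fmul_def)+

lemma fmul_zero_right [simp]: "fmul q 0 = 0" "fmul q (\<lambda>w. 0) = (\<lambda>w. 0)"
  by (rule ext, simp add: fmul_def)+

lemma fmul_smult_left: "fmul (fsmult c p) q = fsmult c (fmul p q)"
  by (rule ext) (simp add: fmul_def fsmult_def sum_distrib_left algebra_simps)

lemma fmul_smult_right: "fmul q (fsmult c p) = fsmult c (fmul q p)"
  by (rule ext) (simp add: fmul_def fsmult_def sum_distrib_left algebra_simps)

lemma fmul_sum_left: "fmul (\<Sum>i\<in>A. f i) q = (\<Sum>i\<in>A. fmul (f i) q)"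
  by (induction A rule: infinite_finite_induct) (simp_all add: fmul_add_left)

lemma fmul_sum_right: "fmul q (\<Sum>i\<in>A. f i) = (\<Sum>i\<in>A. fmul q (f i))"
  by (induction A rule: infinite_finite_induct) (simp_all add: fmul_add_right)

lemma fmul_sum_list_right: "fmul q (sum_list (map f xs)) = sum_list (map (\<lambda>i. fmul q (f i)) xs)"
  by (induction xs) (simp_all add: fmul_add_right)

lemma fmul_assoc: "fmul (fmul p q) r = fmul p (fmul q r)"
proof (rule ext)
  fix w show "fmul (fmul p q) r w = fmul p (fmul q r) w"
  proof (induction w arbitrary: p)
    case Nil
    then show ?case by (simp add: fmul_Nil mult.assoc)
  next
    case (Cons a w)
    have tail: "(\<lambda>u. fmul p q (a # u)) = fsmult (p []) (\<lambda>u. q (a # u)) + fmul (\<lambda>u. p (a # u)) q"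
      by (rule ext) (simp add: fmul_Cons fsmult_def)
    have "fmul (fmul p q) r (a # w) = fmul p q [] * r (a # w) + fmul (\<lambda>u. fmul p q (a # u)) r w"
      by (simp add: fmul_Cons)
    also have "\<dots> = p [] * q [] * r (a # w) + p [] * fmul (\<lambda>u. q (a # u)) r w
        + fmul (fmul (\<lambda>u. p (a # u)) q) r w"
      by (simp add: tail fmul_add_left fmul_smult_left fmul_Nil) (simp add: fsmult_def add.assoc)
    also have "\<dots> = fmul p (fmul q r) (a # w)"
      by (simp add: Cons.IH fmul_Cons algebra_simps fsmult_def)
    finally show ?case .
  qed
qed

lemma fmul_fone_left [simp]: "fmul fone q = q"
proof (rule ext)
  fix w
  show "fmul fone q w = q w"
    by (cases w) (simp_all add: fmul_Nil fmul_Cons fone_def)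
qed

lemma fmul_fone_right [simp]: "fmul q fone = q"
proof (rule ext)
  fix w
  show "fmul q fone w = q w"
    by (induction w arbitrary: q) (simp_all add: fmul_Nil fmul_Cons fone_def)
qed

lemma fmul_fvar_left:
  "fmul (fvar x) q = (\<lambda>w. case w of [] \<Rightarrow> 0 | b # w' \<Rightarrow> if b = x then q w' else 0)"
proof (rule ext)
  fix w show "fmul (fvar x) q w = (case w of [] \<Rightarrow> 0 | b # w' \<Rightarrow> if b = x then q w' else 0)"
  proof (cases w)
    case (Cons b w')
    have "(\<lambda>u. fvar x (b # u)) = (if b = x then fone else 0)"
      by (rule ext) (auto simp: fvar_def fone_def)
    then have "fmul (\<lambda>u. fvar x (b # u)) q = fmul (if b = x then fone else 0) q" by (rule arg_cong)
    moreover have "fvar x [] = 0" by (simp add: fvar_def)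
    ultimately show ?thesis using Cons
        by (cases "b = x") (simp_all add: fmul_Cons, simp_all add: fvar_def)
  qed (simp add: fmul_Nil fvar_def)
qed

lemma fmonom_Nil: "fmonom [] = fone"
  by (simp add: fone_eq_fmonom)

lemma fmonom_Cons: "fmonom (x # w) = fmul (fvar x) (fmonom w)"
  by (rule ext) (auto simp: fmul_fvar_left fmonom_def split: list.split)

lemma fmonom_append: "fmonom (u @ v) = fmul (fmonom u) (fmonom v)"
  by (induction u) (simp_all add: fmonom_Nil fmonom_Cons fmul_assoc)

lemma fsupp_fmul: "fsupp (fmul p q) \<subseteq> (\<lambda>(u, v). u @ v) ` (fsupp p \<times> fsupp q)"
proof
  fix w
  assume "w \<in> fsupp (fmul p q)"
  then have "(\<Sum>i\<le>length w. p (take i w) * q (drop i w)) \<noteq> 0"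
    by (simp add: fsupp_def fmul_def)
  then obtain i where "p (take i w) * q (drop i w) \<noteq> 0"
    using sum.neutral by force
  then have "(take i w, drop i w) \<in> fsupp p \<times> fsupp q"
    by (auto simp: fsupp_def)
  then show "w \<in> (\<lambda>(u, v). u @ v) ` (fsupp p \<times> fsupp q)"
    by (intro image_eqI[of _ _ "(take i w, drop i w)"]) auto
qed

lemma finite_fsupp: "p \<in> fpolys \<Longrightarrow> finite (fsupp p)"
  by (simp add: fpolys_def)

lemma fsupp_add: "fsupp (p + q) \<subseteq> fsupp p \<union> fsupp (q :: 'a::monoid_add fpoly)"
  by (auto simp: fsupp_def)

lemma fsupp_diff: "fsupp (p - q) \<subseteq> fsupp p \<union> fsupp (q :: 'a::ab_group_add fpoly)"
  by (auto simp: fsupp_def)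

lemma fsupp_smult: "fsupp (fsmult c p) \<subseteq> fsupp (p :: 'a::mult_zero fpoly)"
  by (auto simp: fsupp_def fsmult_def)

lemma fpolys_fmul [intro]: "p \<in> fpolys \<Longrightarrow> q \<in> fpolys \<Longrightarrow> fmul p q \<in> fpolys"
  unfolding fpolys_def by simp (rule finite_subset[OF fsupp_fmul], auto)

lemma fpolys_add [intro]: "p \<in> fpolys \<Longrightarrow> q \<in> fpolys \<Longrightarrow> (p::'a::monoid_add fpoly) + q \<in> fpolys"
  unfolding fpolys_def fsupp_def
  by simp (rule finite_subset[of _ "{w. p w \<noteq> 0} \<union> {w. q w \<noteq> 0}"], auto)

lemma fpolys_diff [intro]: "p \<in> fpolys \<Longrightarrow> q \<in> fpolys \<Longrightarrow> (p::'a::ab_group_add fpoly) - q \<in> fpolys"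
  unfolding fpolys_def fsupp_def
  by simp (rule finite_subset[of _ "{w. p w \<noteq> 0} \<union> {w. q w \<noteq> 0}"], auto)

lemma fpolys_smult [intro]: "p \<in> fpolys \<Longrightarrow> fsmult c (p::'a::mult_zero fpoly) \<in> fpolys"
  unfolding fpolys_def fsupp_def fsmult_def
  by simp (rule finite_subset[of _ "{w. p w \<noteq> 0}"], auto)

lemma fpolys_zero [intro, simp]: "0 \<in> fpolys"
  by (simp add: fpolys_def fsupp_def)

lemma fpolys_sum [intro]: "(\<And>i. i \<in> A \<Longrightarrow> f i \<in> fpolys) \<Longrightarrow> sum f A \<in> fpolys"
  by (induction A rule: infinite_finite_induct) auto

lemma fpolys_fmonom [intro, simp]: "fmonom w \<in> fpolys"
  by (simp add: fpolys_def fsupp_def fmonom_def)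

lemma fpolys_fone [intro, simp]: "fone \<in> fpolys"
  by (simp add: fone_eq_fmonom)

lemma fpolys_fvar [intro, simp]: "fvar x \<in> fpolys"
  by (simp add: fvar_eq_fmonom)

lemma fpolys_fcomm [intro]: "p \<in> fpolys \<Longrightarrow> q \<in> fpolys \<Longrightarrow> fcomm p q \<in> fpolys"
  by (auto simp: fcomm_eq)

lemma fpolys_fcomm_list [intro]: "p \<in> fpolys \<Longrightarrow> set qs \<subseteq> fpolys \<Longrightarrow> fcomm_list p qs \<in> fpolys"
  unfolding fcomm_list_def by (induction qs arbitrary: p) auto

lemma fpoly_expansion:
  fixes p :: "'a::comm_semiring_1 fpoly"
  assumes "p \<in> fpolys"
  shows "p = (\<Sum>w\<in>fsupp p. fsmult (p w) (fmonom w))"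
proof (rule ext)
  fix u
  have "(\<Sum>w\<in>fsupp p. fsmult (p w) (fmonom w)) u = (\<Sum>w\<in>fsupp p. if w = u then p w else 0)"
    unfolding sum_fun_apply fsmult_def fmonom_def by (intro sum.cong) auto
  also have "\<dots> = p u"
    using assms by (simp add: fpolys_def sum.delta') (simp add: fsupp_def)
  finally show "p u = (\<Sum>w\<in>fsupp p. fsmult (p w) (fmonom w)) u"
    by simp
qed

lemma fsmult_fsmult: "fsmult a (fsmult b p) = fsmult (a * b) (p :: 'a::comm_semiring_1 fpoly)"
  by (rule ext) (simp add: fsmult_def mult.assoc)

lemma fmul_sum_sum:
  fixes a b :: "_ \<Rightarrow> 'a::comm_semiring_1"
  shows "fmul (\<Sum>u\<in>A. fsmult (a u) (X u)) (\<Sum>v\<in>B. fsmult (b v) (Y v))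
    = (\<Sum>u\<in>A. \<Sum>v\<in>B. fsmult (a u * b v) (fmul (X u) (Y v)))"
  unfolding fmul_sum_left
  unfolding fmul_sum_right fmul_smult_left fmul_smult_right fsmult_fsmult
  by (simp add: mult.commute)

lemma fmul_expansion:
  fixes p q :: "'a::comm_semiring_1 fpoly"
  assumes "p \<in> fpolys" "q \<in> fpolys"
  shows "fmul p q = (\<Sum>u\<in>fsupp p. \<Sum>v\<in>fsupp q. fsmult (p u * q v) (fmonom (u @ v)))"
  by (subst fpoly_expansion[OF assms(1)], subst fpoly_expansion[OF assms(2)])
    (simp only: fmul_sum_sum fmonom_append)

definition lin_ext :: "(var list \<Rightarrow> 'b \<Rightarrow> 'a::comm_semiring_1) \<Rightarrow> 'a fpoly \<Rightarrow> 'b \<Rightarrow> 'a" where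
  "lin_ext G p = (\<lambda>x. \<Sum>w\<in>fsupp p. p w * G w x)"

lemma lin_ext_superset:
  assumes "finite A" "fsupp p \<subseteq> A"
  shows "lin_ext G p x = (\<Sum>w\<in>A. p w * G w x)"
  unfolding lin_ext_def using assms
  by (intro sum.mono_neutral_left) (auto simp: fsupp_def)

lemma lin_ext_add:
  assumes "p \<in> fpolys" "q \<in> fpolys"
  shows "lin_ext G (p + q) x = lin_ext G p x + lin_ext G q x"
proof -
  have f: "finite (fsupp p \<union> fsupp q)" using assms by (simp add: finite_fsupp)
  show ?thesis
    using lin_ext_superset[OF f fsupp_add, where G=G and x=x] lin_ext_superset[OF f, of p G x]
      lin_ext_superset[OF f, of q G x]
    by (simp add: sum.distrib algebra_simps)
qed

lemma lin_ext_diff: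
  fixes p q :: "'a::comm_ring_1 fpoly"
  assumes "p \<in> fpolys" "q \<in> fpolys"
  shows "lin_ext G (p - q) x = lin_ext G p x - lin_ext G q x"
proof -
  have f: "finite (fsupp p \<union> fsupp q)" using assms by (simp add: finite_fsupp)
  show ?thesis
    using lin_ext_superset[OF f fsupp_diff, where G=G and x=x] lin_ext_superset[OF f, of p G x]
      lin_ext_superset[OF f, of q G x]
    by (simp add: sum_subtractf algebra_simps)
qed

lemma lin_ext_smult:
  assumes "p \<in> fpolys"
  shows "lin_ext G (fsmult c p) x = c * lin_ext G p x"
  using lin_ext_superset[OF finite_fsupp[OF assms] fsupp_smult, where G=G and x=x]
  by (simp add: lin_ext_def fsmult_def sum_distrib_left algebra_simps)

lemma lin_ext_zero[simp]: "lin_ext G 0 x = 0"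
  by (simp add: lin_ext_def fsupp_def)

lemma lin_ext_fmonom: "lin_ext G (fmonom w) x = G w x"
proof -
  have "fsupp (fmonom w :: 'a fpoly) = {w}" by (auto simp: fsupp_def fmonom_def)
  then show ?thesis by (simp add: lin_ext_def fmonom_def)
qed

lemma lin_ext_sum:
  assumes "finite A" "\<And>i. i \<in> A \<Longrightarrow> f i \<in> fpolys"
  shows "lin_ext G (\<Sum>i\<in>A. f i) x = (\<Sum>i\<in>A. lin_ext G (f i) x)"
  using assms
proof (induction A rule: finite_induct)
  case (insert a F)
  have "lin_ext G (sum f (insert a F)) x = lin_ext G (f a + sum f F) x" using insert by simp
  also have "\<dots> = lin_ext G (f a) x + lin_ext G (sum f F) x"
    by (rule lin_ext_add) (auto intro!: fpolys_sum insert.prems)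
  also have "\<dots> = (\<Sum>i\<in>insert a F. lin_ext G (f i) x)" using insert by simp
  finally show ?case .
qed simp

lemma lin_ext_fmul:
  assumes "p \<in> fpolys" "q \<in> fpolys"
  shows "lin_ext G (fmul p q) x = (\<Sum>u\<in>fsupp p. \<Sum>v\<in>fsupp q. p u * q v * G (u @ v) x)"
  using assms
  by (simp add: fmul_expansion lin_ext_sum finite_fsupp fpolys_sum fpolys_smult lin_ext_smult
      lin_ext_fmonom)

lemma fsubst_eq_lin_ext: "fsubst \<sigma> p = lin_ext (subst_word \<sigma>) p"
  by (simp add: fsubst_def lin_ext_def)

lemma subst_word_append: "subst_word \<sigma> (u @ v) = fmul (subst_word \<sigma> u) (subst_word \<sigma> v)"
  by (induction u) (simp_all add: fmul_assoc)

lemma fpolys_subst_word: "(\<And>x. \<sigma> x \<in> fpolys) \<Longrightarrow> subst_word \<sigma> w \<in> fpolys"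
  by (induction w) auto

lemma fsubst_expansion: "fsubst \<sigma> p = (\<Sum>u\<in>fsupp p. fsmult (p u) (subst_word \<sigma> u))"
  by (rule ext) (simp add: fsubst_def sum_fun_apply fsmult_def)

lemma fpolys_fsubst: "(\<And>x. \<sigma> x \<in> fpolys) \<Longrightarrow> fsubst \<sigma> p \<in> fpolys"
  unfolding fsubst_expansion by (intro fpolys_sum fpolys_smult fpolys_subst_word)

lemma fsubst_fmul:
  assumes "p \<in> fpolys" "q \<in> fpolys"
  shows "fsubst \<sigma> (fmul p q) = fmul (fsubst \<sigma> p) (fsubst \<sigma> q)"
proof (rule ext)
  fix x
  have "fsubst \<sigma> (fmul p q) x
      = (\<Sum>u\<in>fsupp p. \<Sum>v\<in>fsupp q. fsmult (p u * q v) (fmul (subst_word \<sigma> u) (subst_word \<sigma> v))) x"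
    by (simp add: fsubst_eq_lin_ext lin_ext_fmul assms sum_fun_apply fsmult_def subst_word_append)
  also have "\<dots> = fmul (fsubst \<sigma> p) (fsubst \<sigma> q) x"
    by (simp only: fsubst_expansion fmul_sum_sum)
  finally show "fsubst \<sigma> (fmul p q) x = fmul (fsubst \<sigma> p) (fsubst \<sigma> q) x" .
qed

lemma fsubst_fmonom: "fsubst \<sigma> (fmonom w) = subst_word \<sigma> w"
  by (rule ext) (simp add: fsubst_eq_lin_ext lin_ext_fmonom)

lemma fsubst_fvar: "fsubst \<sigma> (fvar x) = \<sigma> x"
  by (simp add: fvar_eq_fmonom fsubst_fmonom)

lemma fsubst_diff:
  "(p :: 'a::comm_ring_1 fpoly) \<in> fpolys \<Longrightarrow> q \<in> fpolys \<Longrightarrow> fsubst \<sigma> (p - q) = fsubst \<sigma> p - fsubst \<sigma> q"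
  by (rule ext) (simp add: fsubst_eq_lin_ext lin_ext_diff)

lemma fsubst_fcomm:
  "(p :: 'a::comm_ring_1 fpoly) \<in> fpolys \<Longrightarrow> q \<in> fpolys \<Longrightarrow>
    fsubst \<sigma> (fcomm p q) = fcomm (fsubst \<sigma> p) (fsubst \<sigma> q)"
  by (simp add: fcomm_eq fsubst_diff fsubst_fmul fpolys_fmul)

lemma fsubst_fcomm_list:
  "(p :: 'a::comm_ring_1 fpoly) \<in> fpolys \<Longrightarrow> set qs \<subseteq> fpolys \<Longrightarrow>
    fsubst \<sigma> (fcomm_list p qs) = fcomm_list (fsubst \<sigma> p) (map (fsubst \<sigma>) qs)"
  unfolding fcomm_list_def by (induction qs arbitrary: p) (auto simp: fsubst_fcomm fpolys_fcomm)

lemma fcomm_list_Cons: "fcomm_list X (c # v) = fcomm_list (fcomm X c) v"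
  by (simp add: fcomm_list_def)

lemma fcomm_list_append: "fcomm_list X (u @ v) = fcomm_list (fcomm_list X u) v"
  by (simp add: fcomm_list_def)

lemma fcomm_list_diff:
  fixes p q :: "'a::comm_ring_1 fpoly"
  shows "fcomm_list p qs - fcomm_list q qs = fcomm_list (p - q) qs"
proof (induction qs arbitrary: p q)
  case (Cons r qs)
  have "fcomm p r - fcomm q r = fcomm (p - q) r"
    by (simp add: fcomm_eq fmul_diff_left fmul_diff_right)
  then show ?case
    by (metis Cons.IH fcomm_list_Cons)
qed (simp add: fcomm_list_def)

text \<open>The Jacobi identity, in the form that lets adjacent commutator entries be swapped.\<close>
lemma fcomm_fcomm_swap:
  fixes X a b :: "'a::comm_ring_1 fpoly"
  shows "fcomm (fcomm X a) b - fcomm (fcomm X b) a = fcomm X (fcomm a b)"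
  by (simp add: fcomm_eq fmul_diff_left fmul_diff_right fmul_assoc algebra_simps)

lemma even_fpoly_fvar: "\<not> is_odd_var x \<Longrightarrow> even_fpoly (fvar x)"
  by (auto simp: even_fpoly_def fvar_def word_odd_def)

lemma odd_fpoly_fvar: "is_odd_var x \<Longrightarrow> odd_fpoly (fvar x)"
  by (auto simp: odd_fpoly_def fvar_def word_odd_def)

lemma odd_fpoly_fmonom: "word_odd w \<Longrightarrow> odd_fpoly (fmonom w)"
  by (auto simp: odd_fpoly_def fmonom_def)

lemma graded_substI:
  assumes "\<And>x. \<sigma> x \<in> fpolys" "\<And>i. even_fpoly (\<sigma> (Yv i))" "\<And>i. odd_fpoly (\<sigma> (Zv i))"
  shows "graded_subst \<sigma>"
  unfolding graded_subst_def using assms by (auto simp: is_odd_var_def split: var.split)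

section \<open>The superalgebra \<open>N\<^sub>m\<close>\<close>

lemma sum_lessThan_single:
  fixes m :: nat
  assumes "l0 < m" "\<And>l. l < m \<Longrightarrow> l \<noteq> l0 \<Longrightarrow> f l = 0"
  shows "(\<Sum>l<m. f l) = (f l0 :: 'a::comm_monoid_add)"
proof -
  have "(\<Sum>l<m. f l) = (\<Sum>l<m. if l = l0 then f l0 else 0)"
    using assms by (intro sum.cong) auto
  also have "\<dots> = f l0" using assms(1) by (simp add: sum.delta)
  finally show ?thesis .
qed

lemma sum_lessThan_interval:
  fixes m :: nat
  assumes "i \<le> j" "j < m"
  shows "(\<Sum>l<m. if i \<le> l \<and> l \<le> j then g (l - i) else (0::'a::comm_monoid_add))
       = (\<Sum>e\<le>j - i. g e)"
proof -
  have "(\<Sum>l<m. if i \<le> l \<and> l \<le> j then g (l - i) else 0) = (\<Sum>l\<in>{i..j}. g (l - i))"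
  proof -
    have "{l\<in>{..<m}. i \<le> l \<and> l \<le> j} = {i..j}" using assms by auto
    then show ?thesis by (simp add: sum.inter_filter[symmetric])
  qed
  also have "\<dots> = (\<Sum>e\<in>{0..j-i}. g e)"
    using assms by (intro sum.reindex_bij_witness[of _ "\<lambda>e. e + i" "\<lambda>l. l - i"]) auto
  finally show ?thesis by (simp add: atLeast0AtMost)
qed

lemma mmul_eq_0_entry:
  "(\<And>l. l < m \<Longrightarrow> A i l * B l j = 0) \<Longrightarrow> mmul m A B i j = 0"
  by (simp add: mmul_def)

lemma mmul_zero_left[simp]: "mmul m 0 A = 0"
  by (intro ext) (simp add: mmul_def)

lemma mmul_zero_right[simp]: "mmul m A 0 = 0"
  by (intro ext) (simp add: mmul_def)

lemma mmul_add_left: "mmul m (A + B) C = mmul m A C + mmul m B C"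
  by (intro ext) (simp add: mmul_def sum.distrib algebra_simps)

lemma mmul_add_right: "mmul m C (A + B) = mmul m C A + mmul m C B"
  by (intro ext) (simp add: mmul_def sum.distrib algebra_simps)

lemma mmul_assoc: "mmul m (mmul m A B) C = mmul m A (mmul m B C)"
proof (intro ext)
  fix i j
  show "mmul m (mmul m A B) C i j = mmul m A (mmul m B C) i j"
  proof (cases "i < m \<and> j < m")
    case True
    then show ?thesis
      by (simp add: mmul_def sum_distrib_left sum_distrib_right mult.assoc) (rule sum.swap)
  qed (auto simp: mmul_def)
qed

definition mat_within :: "nat \<Rightarrow> 'a::zero mat \<Rightarrow> bool" where
  "mat_within m A = (\<forall>i j. \<not> (i < m \<and> j < m) \<longrightarrow> A i j = 0)"

lemma mmul_midt_left: "mat_within m B \<Longrightarrow> mmul m (midt m) B = B"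
proof (intro ext)
  fix i j assume "mat_within m B"
  then show "mmul m (midt m) B i j = B i j"
    unfolding mmul_def mat_within_def
    by (cases "i < m \<and> j < m") (simp_all, subst sum_lessThan_single[of i], auto simp: midt_def)
qed

lemma mmul_midt_right: "mat_within m B \<Longrightarrow> mmul m B (midt m) = B"
proof (intro ext)
  fix i j assume "mat_within m B"
  then show "mmul m B (midt m) i j = B i j"
    unfolding mmul_def mat_within_def
    by (cases "i < m \<and> j < m") (simp_all, subst sum_lessThan_single[of j], auto simp: midt_def)
qed

lemma mat_within_mmul: "mat_within m (mmul m A B)"
  by (simp add: mat_within_def mmul_def)

lemma mat_within_midt: "mat_within m (midt m)"
  by (simp add: mat_within_def midt_def)

text \<open>With \<open>E'\<close> the nilpotent shift on the last \<open>m - 1\<close> coordinates, \<^term>\<open>even_mat m P\<close> is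
  \<open>P(0) e\<^sub>1\<^sub>1 + P(E')\<close> and \<^term>\<open>odd_mat m Q\<close> is \<open>e\<^sub>1\<^sub>2 Q(E')\<close>; these are exactly the even and
  the odd elements of \<open>N\<^sub>m\<close> (\<open>NevenE\<close>, \<open>NoddE\<close>), with indices counted from \<open>0\<close>.\<close>
definition even_mat :: "nat \<Rightarrow> 'a::comm_semiring_1 poly \<Rightarrow> 'a mat" where
  "even_mat m P = (\<lambda>i j. if i = 0 \<and> j = 0 then coeff P 0
      else if 1 \<le> i \<and> i \<le> j \<and> j < m then coeff P (j - i) else 0)"

definition odd_mat :: "nat \<Rightarrow> 'a::comm_semiring_1 poly \<Rightarrow> 'a mat" where
  "odd_mat m Q = (\<lambda>i j. if i = 0 \<and> 1 \<le> j \<and> j < m then coeff Q (j - 1) else 0)"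

definition corner_mat :: "nat \<Rightarrow> 'a::comm_semiring_1 \<Rightarrow> 'a mat" where
  "corner_mat m c = (\<lambda>i j. if i = 0 \<and> j = m - 1 then c else 0)"

lemma even_mat_add: "even_mat m (P + P') = even_mat m P + even_mat m P'"
  by (intro ext) (simp add: even_mat_def)

lemma odd_mat_add: "odd_mat m (P + P') = odd_mat m P + odd_mat m P'"
  by (intro ext) (simp add: odd_mat_def)

lemma even_mat_0[simp]: "even_mat m 0 = 0"
  by (intro ext) (simp add: even_mat_def)

lemma odd_mat_0[simp]: "odd_mat m 0 = 0"
  by (intro ext) (simp add: odd_mat_def)

lemma mat_within_even_mat: "m \<ge> 1 \<Longrightarrow> mat_within m (even_mat m P)"
  by (auto simp: mat_within_def even_mat_def)

lemma mat_within_odd_mat: "mat_within m (odd_mat m P)"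
  by (auto simp: mat_within_def odd_mat_def)

lemma midt_eq_even_mat: "m \<ge> 1 \<Longrightarrow> midt m = even_mat m 1"
  by (intro ext) (auto simp: midt_def even_mat_def coeff_1)

lemma mmul_even_even:
  assumes "m \<ge> 1"
  shows "mmul m (even_mat m P) (even_mat m P') = even_mat m (P * P')"
proof (intro ext)
  fix i j
  show "mmul m (even_mat m P) (even_mat m P') i j = even_mat m (P * P') i j"
  proof (cases "i < m \<and> j < m")
    case False then show ?thesis using assms by (auto simp: mmul_def even_mat_def)
  next
    case True
    show ?thesis
    proof (cases "i = 0")
      case i0: True
      have "mmul m (even_mat m P) (even_mat m P') i j = even_mat m P 0 0 * even_mat m P' 0 j"
        using True i0 assms unfolding mmul_def
        by (simp, intro sum_lessThan_single) (auto simp: even_mat_def)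
      then show ?thesis using i0 by (auto simp: even_mat_def coeff_mult)
    next
      case i1: False
      show ?thesis
      proof (cases "i \<le> j")
        case False
        then show ?thesis using True i1 unfolding mmul_def
          by (simp add: even_mat_def, intro sum.neutral ballI) auto
      next
        case ij: True
        have "mmul m (even_mat m P) (even_mat m P') i j
            = (\<Sum>l<m. if i \<le> l \<and> l \<le> j then coeff P (l - i) * coeff P' (j - i - (l - i)) else 0)"
          using True i1 ij unfolding mmul_def even_mat_def by (auto intro!: sum.cong)
        also have "\<dots> = coeff (P * P') (j - i)"
          using True ij by (subst sum_lessThan_interval) (auto simp: coeff_mult)
        finally show ?thesis using i1 ij True by (simp add: even_mat_def)
      qed
    qed
  qed
qed

lemma mmul_even_odd:
  assumes "m \<ge> 1"
  shows "mmul m (even_mat m P) (odd_mat m Q) = odd_mat m (smult (coeff P 0) Q)"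
proof (intro ext)
  fix i j
  show "mmul m (even_mat m P) (odd_mat m Q) i j = odd_mat m (smult (coeff P 0) Q) i j"
  proof (cases "i < m \<and> j < m")
    case False then show ?thesis using assms by (auto simp: mmul_def odd_mat_def)
  next
    case True
    show ?thesis
    proof (cases "i = 0")
      case i0: True
      have "mmul m (even_mat m P) (odd_mat m Q) i j = even_mat m P 0 0 * odd_mat m Q 0 j"
        using True i0 assms unfolding mmul_def
        by (simp, intro sum_lessThan_single) (auto simp: even_mat_def)
      then show ?thesis using i0 by (auto simp: even_mat_def odd_mat_def)
    next
      case False
      then show ?thesis using True unfolding mmul_def
        by (simp add: odd_mat_def, intro sum.neutral ballI) (auto simp: even_mat_def)
    qed
  qed
qed

lemma mmul_odd_even:
  assumes "m \<ge> 1"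
  shows "mmul m (odd_mat m Q) (even_mat m P) = odd_mat m (Q * P)"
proof (intro ext)
  fix i j
  show "mmul m (odd_mat m Q) (even_mat m P) i j = odd_mat m (Q * P) i j"
  proof (cases "i = 0 \<and> 1 \<le> j \<and> j < m")
    case False
    have "mmul m (odd_mat m Q) (even_mat m P) i j = 0"
      by (rule mmul_eq_0_entry) (use False in \<open>auto simp: even_mat_def odd_mat_def\<close>)
    then show ?thesis using False by (auto simp: odd_mat_def)
  next
    case True
    have "mmul m (odd_mat m Q) (even_mat m P) i j
        = (\<Sum>l<m. if 1 \<le> l \<and> l \<le> j then coeff Q (l - 1) * coeff P (j - 1 - (l - 1)) else 0)"
      using True unfolding mmul_def odd_mat_def even_mat_def by (auto intro!: sum.cong)
    also have "\<dots> = coeff (Q * P) (j - 1)"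
      using True by (subst sum_lessThan_interval) (auto simp: coeff_mult)
    finally show ?thesis using True by (simp add: odd_mat_def)
  qed
qed

lemma mmul_odd_odd: "mmul m (odd_mat m Q) (odd_mat m Q') = 0"
  by (intro ext) (simp add: mmul_def odd_mat_def, intro impI sum.neutral ballI, auto)

lemma mmul_even_corner:
  "m \<ge> 2 \<Longrightarrow> mmul m (even_mat m P) (corner_mat m c) = corner_mat m (coeff P 0 * c)"
proof (intro ext)
  fix i j assume m: "m \<ge> 2"
  show "mmul m (even_mat m P) (corner_mat m c) i j = corner_mat m (coeff P 0 * c) i j"
  proof (cases "i = 0 \<and> j = m - 1")
    case True
    then show ?thesis using m unfolding mmul_def
      by (simp add: corner_mat_def, subst sum_lessThan_single[of 0]) (auto simp: even_mat_def)
  next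
    case False
    have "mmul m (even_mat m P) (corner_mat m c) i j = 0"
      by (rule mmul_eq_0_entry) (use False m in \<open>auto simp: even_mat_def corner_mat_def\<close>)
    then show ?thesis using False by (auto simp: corner_mat_def)
  qed
qed

lemma mmul_corner_even:
  "m \<ge> 2 \<Longrightarrow> mmul m (corner_mat m c) (even_mat m P) = corner_mat m (c * coeff P 0)"
proof (intro ext)
  fix i j assume m: "m \<ge> 2"
  show "mmul m (corner_mat m c) (even_mat m P) i j = corner_mat m (c * coeff P 0) i j"
  proof (cases "i = 0 \<and> j = m - 1")
    case True
    then show ?thesis using m unfolding mmul_def
      by (simp add: corner_mat_def, subst sum_lessThan_single[of "m - 1"]) (auto simp: even_mat_def)
  next
    case False
    have "mmul m (corner_mat m c) (even_mat m P) i j = 0"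
      by (rule mmul_eq_0_entry) (use False m in \<open>auto simp: even_mat_def corner_mat_def\<close>)
    then show ?thesis using False by (auto simp: corner_mat_def)
  qed
qed

lemma mmul_odd_corner: "m \<ge> 2 \<Longrightarrow> mmul m (odd_mat m Q) (corner_mat m c) = 0"
  by (intro ext)
      (simp add: mmul_def, intro impI sum.neutral ballI, auto simp: odd_mat_def corner_mat_def)

lemma mmul_corner_odd: "m \<ge> 2 \<Longrightarrow> mmul m (corner_mat m c) (odd_mat m Q) = 0"
  by (intro ext)
      (simp add: mmul_def, intro impI sum.neutral ballI, auto simp: odd_mat_def corner_mat_def)

lemma mmul_even_row_0: "c < m \<Longrightarrow> mmul m (even_mat m P) M 0 c = coeff P 0 * M 0 c"
  unfolding mmul_def by (simp, subst sum_lessThan_single[of 0]) (auto simp: even_mat_def)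

lemma mpow_Emat:
  "(mpow m (Emat m) e i j :: 'a::comm_semiring_1) = (if j = i + e \<and> j < m then 1 else 0)"
proof (induction e arbitrary: i j)
  case 0
  then show ?case
    by (auto simp: midt_def)
next
  case (Suc e)
  show ?case
  proof (cases "i < m \<and> j < m \<and> Suc i < m")
    case True
    have "(mpow m (Emat m) (Suc e) i j :: 'a) = (\<Sum>l<m. Emat m i l * mpow m (Emat m) e l j)"
      using True by (simp add: mmul_def)
    also have "\<dots> = (\<Sum>l<m. Emat m i l * (if j = l + e \<and> j < m then 1 else 0))"
      using Suc.IH by simp
    also have "\<dots> = (if j = i + Suc e \<and> j < m then 1 else 0)"
      using True by (subst sum_lessThan_single[of "Suc i"]) (auto simp: Emat_def)
    finally show ?thesis .
  next
    case False
    have "(mpow m (Emat m) (Suc e) i j :: 'a) = mmul m (Emat m) (mpow m (Emat m) e) i j"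
      by simp
    also have "\<dots> = 0"
      by (rule mmul_eq_0_entry) (use False Suc.IH in \<open>auto simp: Emat_def\<close>)
    finally show ?thesis
      using False by auto
  qed
qed

definition Nmat :: "nat \<Rightarrow> (nat \<Rightarrow> 'a::comm_semiring_1) \<Rightarrow> (nat \<Rightarrow> 'a) \<Rightarrow> 'a mat" where
  "Nmat m a b = (\<lambda>i j. (if i \<le> j \<and> j < m \<and> j - i \<le> m - 2 then a (j - i) else 0)
      + (if i = 0 \<and> 1 \<le> j \<and> j < m then b j else 0))"

lemma Nalg_eq_Nmat: "Nalg m = {Nmat m a b | a b. True}"
proof -
  have eq: "(\<lambda>i j. (\<Sum>e\<le>m-2. a e * mpow m (Emat m) e i j) + (\<Sum>c\<in>{1..<m}. b c * munit m 0 c i j))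
      = Nmat m a b" for a b :: "nat \<Rightarrow> 'a"
  proof (intro ext)
    fix i j
    have 1: "(\<Sum>e\<le>m-2. a e * mpow m (Emat m) e i j)
        = (\<Sum>e\<le>m-2. if e = j - i then (if i \<le> j \<and> j < m then a e else 0) else 0)"
      by (intro sum.cong) (auto simp: mpow_Emat)
    have 2: "(\<Sum>c\<in>{1..<m}. b c * munit m 0 c i j)
        = (\<Sum>c\<in>{1..<m}. if c = j then (if i = 0 \<and> j < m then b c else 0) else 0)"
      by (intro sum.cong) (auto simp: munit_def)
    show "(\<Sum>e\<le>m-2. a e * mpow m (Emat m) e i j) + (\<Sum>c\<in>{1..<m}. b c * munit m 0 c i j)
        = Nmat m a b i j"
      unfolding 1 2 by (auto simp: Nmat_def)
  qed
  show ?thesis unfolding Nalg_def eq by auto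
qed

lemma Nmat_in_Nalg: "Nmat m a b \<in> Nalg m"
  unfolding Nalg_eq_Nmat by auto

lemma even_mat_in_Nalg: "m \<ge> 2 \<Longrightarrow> even_mat m (P::'a::comm_ring_1 poly) \<in> Nalg m"
proof -
  assume m: "m \<ge> 2"
  have "even_mat m P = Nmat m (coeff P) (\<lambda>j. if j \<le> m - 2 then - coeff P j else 0)"
    using m by (intro ext) (auto simp: even_mat_def Nmat_def)
  then show ?thesis by (simp add: Nmat_in_Nalg)
qed

lemma odd_mat_in_Nalg: "odd_mat m Q \<in> Nalg m"
proof -
  have "odd_mat m Q = Nmat m (\<lambda>_. 0) (\<lambda>j. coeff Q (j - 1))"
    by (intro ext) (auto simp: odd_mat_def Nmat_def)
  then show ?thesis by (simp add: Nmat_in_Nalg)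
qed

lemma corner_mat_in_Nalg: "m \<ge> 2 \<Longrightarrow> corner_mat m c \<in> Nalg m"
proof -
  assume m: "m \<ge> 2"
  have "corner_mat m c = Nmat m (\<lambda>_. 0) (\<lambda>j. if j = m - 1 then c else 0)"
    using m by (intro ext) (auto simp: corner_mat_def Nmat_def)
  then show ?thesis by (simp add: Nmat_in_Nalg)
qed

lemma even_mat_in_Neven: "m \<ge> 2 \<Longrightarrow> even_mat m (P::'a::comm_ring_1 poly) \<in> Neven m"
  by (simp add: Neven_def even_mat_in_Nalg) (auto simp: even_pos_def even_mat_def)

lemma odd_mat_in_Nodd: "odd_mat m Q \<in> Nodd m"
  by (simp add: Nodd_def odd_mat_in_Nalg) (auto simp: even_pos_def odd_mat_def)

lemma coeff_monom_sum:
  "coeff (\<Sum>e\<in>A. monom (f e) (g e)) n = (\<Sum>e\<in>A. if g e = n then f e else 0)"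
  by (induction A rule: infinite_finite_induct) (auto simp: coeff_monom)

lemma NevenE:
  assumes m: "m \<ge> 2" and M: "M \<in> Neven m"
  obtains P where "M = even_mat m P"
proof -
  obtain a b where ab: "M = Nmat m a b" using M unfolding Neven_def Nalg_eq_Nmat by auto
  have z: "\<And>j. 1 \<le> j \<Longrightarrow> M 0 j = 0" using M unfolding Neven_def even_pos_def by auto
  define P where "P = (\<Sum>e\<le>m-2. monom (a e) e)"
  have cP: "coeff P n = (if n \<le> m - 2 then a n else 0)" for n
    unfolding P_def coeff_monom_sum by (simp add: sum.delta')
  have "M = even_mat m P"
  proof (intro ext)
    fix i j
    show "M i j = even_mat m P i j"
    proof (cases "i = 0 \<and> 1 \<le> j")
      case True then show ?thesis using z by (auto simp: even_mat_def)
    next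
      case False
      then show ?thesis using m unfolding ab by (auto simp: Nmat_def even_mat_def cP)
    qed
  qed
  then show thesis by (rule that)
qed

lemma NoddE:
  assumes m: "m \<ge> 2" and M: "M \<in> Nodd m"
  obtains Q where "M = odd_mat m Q"
proof -
  obtain a b where ab: "M = Nmat m a b" using M unfolding Nodd_def Nalg_eq_Nmat by auto
  have z: "\<And>i j. even_pos i j \<Longrightarrow> M i j = 0" using M unfolding Nodd_def by auto
  define Q where "Q = (\<Sum>c\<in>{1..<m}. monom (M 0 c) (c - 1))"
  have cQ: "coeff Q n = (if n + 1 < m then M 0 (n + 1) else 0)" for n
  proof -
    have "coeff Q n = (\<Sum>c\<in>{1..<m}. if c = n + 1 then M 0 c else 0)"
      unfolding Q_def coeff_monom_sum by (intro sum.cong) auto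
    then show ?thesis by (simp add: sum.delta)
  qed
  have "M = odd_mat m Q"
  proof (intro ext)
    fix i j
    show "M i j = odd_mat m Q i j"
    proof (cases "i = 0 \<and> 1 \<le> j \<and> j < m")
      case True then show ?thesis by (auto simp: odd_mat_def cQ)
    next
      case False
      show ?thesis
      proof (cases "even_pos i j")
        case True then show ?thesis using z False by (auto simp: odd_mat_def)
      next
        case False2: False
        then show ?thesis using False unfolding ab by (auto simp: Nmat_def odd_mat_def even_pos_def)
      qed
    qed
  qed
  then show thesis by (rule that)
qed

lemma Nmat_col0: "i \<noteq> 0 \<Longrightarrow> Nmat m a b i 0 = 0"
  by (simp add: Nmat_def)

lemma Nmat_last_row: "m \<ge> 2 \<Longrightarrow> l \<noteq> m - Suc 0 \<Longrightarrow> Nmat m a b (m - Suc 0) l = 0"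
  by (auto simp: Nmat_def)

lemma mmul_Nmat_corner:
  "m \<ge> 2 \<Longrightarrow> mmul m (Nmat m a b) (corner_mat m c) = mmul m (corner_mat m c) (Nmat m a b)"
proof (intro ext)
  fix i j assume m: "m \<ge> 2"
  show "mmul m (Nmat m a b) (corner_mat m c) i j = mmul m (corner_mat m c) (Nmat m a b) i j"
  proof (cases "i = 0 \<and> j = m - 1")
    case True
    have "mmul m (Nmat m a b) (corner_mat m c) i j = Nmat m a b 0 0 * c"
      using True m unfolding mmul_def
      by (simp, subst sum_lessThan_single[of 0]) (auto simp: corner_mat_def)
    moreover have "mmul m (corner_mat m c) (Nmat m a b) i j = c * Nmat m a b (m - 1) (m - 1)"
      using True m unfolding mmul_def
      by (simp, subst sum_lessThan_single[of "m - 1"]) (auto simp: corner_mat_def)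
    ultimately show ?thesis using m by (simp add: Nmat_def mult.commute)
  next
    case False
    have "mmul m (Nmat m a b) (corner_mat m c) i j = 0"
      by (rule mmul_eq_0_entry) (use False m in \<open>auto simp: Nmat_col0 corner_mat_def\<close>)
    moreover have "mmul m (corner_mat m c) (Nmat m a b) i j = 0"
      by (rule mmul_eq_0_entry) (use False m in \<open>auto simp: Nmat_last_row corner_mat_def\<close>)
    ultimately show ?thesis by simp
  qed
qed

lemma corner_mat_in_Ncenter: "m \<ge> 2 \<Longrightarrow> corner_mat m c \<in> Ncenter m"
proof -
  assume m: "m \<ge> 2"
  have "mmul m (corner_mat m c) A = mmul m A (corner_mat m c)" if "A \<in> Nalg m" for A
  proof -
    from that obtain a b where "A = Nmat m a b" unfolding Nalg_eq_Nmat by blast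
    then show ?thesis by (simp only: mmul_Nmat_corner[OF m])
  qed
  then show ?thesis using corner_mat_in_Nalg[OF m] unfolding Ncenter_def by auto
qed

lemma coeff_X: "coeff [:0, 1:] n = (if n = 1 then 1 else (0::'a::comm_semiring_1))"
  by (cases n) (auto simp: coeff_pCons split: nat.split)

lemma even_mat_X:
  "even_mat m [:0, 1::'a::comm_semiring_1:] l j = (if 1 \<le> l \<and> j = l + 1 \<and> j < m then 1 else 0)"
  unfolding even_mat_def coeff_X by auto

lemma Ncenter_entries:
  fixes V :: "'a::comm_ring_1 mat"
  assumes m: "m \<ge> 3" and V: "V \<in> Ncenter m"
  shows "V 1 2 = 0" and "\<And>c. 1 \<le> c \<Longrightarrow> c \<le> m - 2 \<Longrightarrow> V 0 c = 0"
proof -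
  have VA: "\<And>A. A \<in> Nalg m \<Longrightarrow> mmul m V A = mmul m A V" using V unfolding Ncenter_def by blast
  have c1: "mmul m V (odd_mat m (1::'a poly)) = mmul m (odd_mat m (1::'a poly)) V"
    by (rule VA) (rule odd_mat_in_Nalg)
  have c2: "mmul m V (even_mat m [:0, 1:]) = mmul m (even_mat m [:0, 1:]) V"
    by (rule VA) (rule even_mat_in_Nalg, use m in simp)
  have "mmul m V (odd_mat m (1::'a poly)) 0 2 = 0"
    by (rule mmul_eq_0_entry) (simp add: odd_mat_def)
  moreover have "mmul m (odd_mat m (1::'a poly)) V 0 2 = V 1 2"
  proof -
    have "mmul m (odd_mat m (1::'a poly)) V 0 2 = (\<Sum>l<m. odd_mat m (1::'a poly) 0 l * V l 2)"
      using m by (simp add: mmul_def)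
    also have "\<dots> = odd_mat m (1::'a poly) 0 1 * V 1 2"
      using m by (intro sum_lessThan_single) (auto simp: odd_mat_def)
    finally show ?thesis using m by (simp add: odd_mat_def)
  qed
  ultimately show "V 1 2 = 0" using c1 by simp
  fix c assume c: "1 \<le> c" "c \<le> m - 2"
  have "mmul m (even_mat m [:0, 1:]) V 0 (c + 1) = 0"
    by (rule mmul_eq_0_entry) (simp add: even_mat_X)
  moreover have "mmul m V (even_mat m [:0, 1:]) 0 (c + 1) = V 0 c"
  proof -
    have "mmul m V (even_mat m [:0, 1:]) 0 (c + 1) = (\<Sum>l<m. V 0 l * even_mat m [:0, 1:] l (c + 1))"
      using m c by (simp add: mmul_def)
    also have "\<dots> = V 0 c * even_mat m [:0, 1:] c (c + 1)"
      using m c by (intro sum_lessThan_single) (auto simp: even_mat_X)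
    finally show ?thesis using m c by (simp add: even_mat_X)
  qed
  ultimately show "V 0 c = 0" using c2 by simp
qed

section \<open>Evaluation in \<open>N\<^sub>m\<close>\<close>

lemma meval_eq_lin_ext: "meval k \<phi> p i = lin_ext (\<lambda>w. meval_word k \<phi> w i) p"
  by (rule ext) (simp add: meval_def lin_ext_def)

lemma mat_within_meval_word: "mat_within k (meval_word k \<phi> w)"
  by (cases w) (simp_all add: mat_within_midt mat_within_mmul)

lemma meval_word_append:
  "meval_word k \<phi> (u @ v) = mmul k (meval_word k \<phi> u) (meval_word k \<phi> v)"
  by (induction u) (simp_all add: mmul_midt_left mat_within_meval_word mmul_assoc)

lemma meval_fmul:
  assumes "p \<in> fpolys" "q \<in> fpolys"
  shows "meval k \<phi> (fmul p q) = mmul k (meval k \<phi> p) (meval k \<phi> q)"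
proof (intro ext)
  fix i j
  have "meval k \<phi> (fmul p q) i j
      = (\<Sum>u\<in>fsupp p. \<Sum>v\<in>fsupp q. p u * q v * mmul k (meval_word k \<phi> u) (meval_word k \<phi> v) i j)"
    by (simp add: meval_eq_lin_ext lin_ext_fmul assms meval_word_append)
  also have "\<dots> = mmul k (meval k \<phi> p) (meval k \<phi> q) i j"
  proof (cases "i < k \<and> j < k")
    case True
    have "(\<Sum>u\<in>fsupp p. \<Sum>v\<in>fsupp q. p u * q v * mmul k (meval_word k \<phi> u) (meval_word k \<phi> v) i j)
        = (\<Sum>u\<in>fsupp p. \<Sum>v\<in>fsupp q. \<Sum>l<k.
            p u * meval_word k \<phi> u i l * (q v * meval_word k \<phi> v l j))"
      using True by (simp add: mmul_def sum_distrib_left mult_ac)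
    also have "\<dots> = (\<Sum>l<k. \<Sum>u\<in>fsupp p. \<Sum>v\<in>fsupp q.
        p u * meval_word k \<phi> u i l * (q v * meval_word k \<phi> v l j))"
      by (simp add: sum.swap[of _ "{..<k}"])
    also have "\<dots> = mmul k (meval k \<phi> p) (meval k \<phi> q) i j"
      using True by (simp add: mmul_def meval_def sum_product)
    finally show ?thesis .
  qed (auto simp: mmul_def)
  finally show "meval k \<phi> (fmul p q) i j = mmul k (meval k \<phi> p) (meval k \<phi> q) i j" .
qed

lemma meval_add:
  "p \<in> fpolys \<Longrightarrow> q \<in> fpolys \<Longrightarrow> meval k \<phi> (p + q) = meval k \<phi> p + meval k \<phi> q"
  by (intro ext) (simp add: meval_eq_lin_ext lin_ext_add)

lemma meval_diff:
  "p \<in> fpolys \<Longrightarrow> q \<in> fpolys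
      \<Longrightarrow> meval k \<phi> (p - q) = meval k \<phi> p - meval k \<phi> (q :: 'a::comm_ring_1 fpoly)"
  by (intro ext) (simp add: meval_eq_lin_ext lin_ext_diff)

lemma meval_smult: "p \<in> fpolys \<Longrightarrow> meval k \<phi> (fsmult c p) = (\<lambda>i j. c * meval k \<phi> p i j)"
  by (intro ext) (simp add: meval_eq_lin_ext lin_ext_smult)

lemma meval_zero [simp]: "meval k \<phi> 0 = 0"
  by (intro ext) (simp add: meval_eq_lin_ext)

lemma meval_fmonom: "meval k \<phi> (fmonom w) = meval_word k \<phi> w"
  by (intro ext) (simp add: meval_eq_lin_ext lin_ext_fmonom)

lemma meval_fone: "meval k \<phi> fone = midt k"
  using meval_fmonom[of k \<phi> "[]"] by (simp add: fone_eq_fmonom)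

lemma meval_fvar: "mat_within k (\<phi> x) \<Longrightarrow> meval k \<phi> (fvar x) = \<phi> x"
  by (simp add: fvar_eq_fmonom meval_fmonom mmul_midt_right)

lemma meval_fcomm:
  "p \<in> fpolys \<Longrightarrow> q \<in> fpolys \<Longrightarrow> meval k \<phi> (fcomm p q)
    = mmul k (meval k \<phi> p) (meval k \<phi> q)
        - mmul k (meval k \<phi> q) (meval k \<phi> (p :: 'a::comm_ring_1 fpoly))"
  by (simp add: fcomm_eq meval_diff meval_fmul fpolys_fmul)

lemma meval_subst_word:
  "(\<And>x. \<sigma> x \<in> fpolys) \<Longrightarrow>
    meval k \<phi> (subst_word \<sigma> u) = meval_word k (\<lambda>x. meval k \<phi> (\<sigma> x)) u"
  by (induction u) (simp_all add: meval_fone meval_fmul fpolys_subst_word)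

lemma meval_fsubst:
  assumes "\<And>x. \<sigma> x \<in> fpolys" "p \<in> fpolys"
  shows "meval k \<phi> (fsubst \<sigma> p) = meval k (\<lambda>x. meval k \<phi> (\<sigma> x)) p"
proof (intro ext)
  fix i j
  have "meval k \<phi> (fsubst \<sigma> p) i j = (\<Sum>u\<in>fsupp p. p u * meval k \<phi> (subst_word \<sigma> u) i j)"
    unfolding fsubst_expansion meval_eq_lin_ext
    by (simp add: lin_ext_sum finite_fsupp assms fpolys_smult fpolys_subst_word lin_ext_smult)
  also have "\<dots> = (\<Sum>u\<in>fsupp p. p u * meval_word k (\<lambda>x. meval k \<phi> (\<sigma> x)) u i j)"
    by (simp add: meval_subst_word assms)
  also have "\<dots> = meval k (\<lambda>x. meval k \<phi> (\<sigma> x)) p i j"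
    by (simp only: meval_def)
  finally show "meval k \<phi> (fsubst \<sigma> p) i j = meval k (\<lambda>x. meval k \<phi> (\<sigma> x)) p i j" .
qed

lemma graded_eval_Yv:
  assumes "m \<ge> 2" "graded_eval m \<phi>"
  obtains P where "\<phi> (Yv i) = even_mat m P"
  using assms NevenE unfolding graded_eval_def by metis

lemma graded_eval_Zv:
  assumes "m \<ge> 2" "graded_eval m \<phi>"
  obtains Q where "\<phi> (Zv i) = odd_mat m Q"
  using assms NoddE unfolding graded_eval_def by metis

lemma graded_evalI:
  "m \<ge> 2 \<Longrightarrow> (\<And>i. \<phi> (Yv i) = even_mat m (P i)) \<Longrightarrow> (\<And>i. \<phi> (Zv i) = odd_mat m (Q i)) \<Longrightarrow>
    graded_eval m (\<phi> :: var \<Rightarrow> 'a::comm_ring_1 mat)"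
  by (simp add: graded_eval_def even_mat_in_Neven odd_mat_in_Nodd)

lemma meval_fvar_graded: "m \<ge> 2 \<Longrightarrow> graded_eval m \<phi> \<Longrightarrow> meval m \<phi> (fvar x) = \<phi> x"
  by (cases x) (metis meval_fvar mat_within_even_mat mat_within_odd_mat graded_eval_Yv
      graded_eval_Zv one_le_numeral order_trans)+

lemma meval_word_graded:
  fixes \<phi> :: "var \<Rightarrow> 'a::comm_ring_1 mat"
  assumes m: "m \<ge> 2" and \<phi>: "graded_eval m \<phi>"
  shows "if word_odd w then \<exists>Q. meval_word m \<phi> w = odd_mat m Q
    else \<exists>P. meval_word m \<phi> w = even_mat m P"
proof (induction w)
  case Nil
  then show ?case
    using m by (auto simp: word_odd_def midt_eq_even_mat)
next
  case (Cons x w)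
  have m1: "m \<ge> 1"
    using m by simp
  show ?case
  proof (cases x)
    case (Yv i)
    obtain P where "\<phi> x = even_mat m P"
      using graded_eval_Yv[OF m \<phi>] Yv by metis
    then show ?thesis
      using Cons.IH m1 Yv
      by (auto simp: word_odd_def is_odd_var_def mmul_even_even mmul_even_odd split: if_splits)
  next
    case (Zv i)
    obtain Q where "\<phi> x = odd_mat m Q"
      using graded_eval_Zv[OF m \<phi>] Zv by metis
    then show ?thesis
      using Cons.IH m1 Zv
      by (auto simp: word_odd_def is_odd_var_def mmul_odd_even mmul_odd_odd
          split: if_splits) (metis even_mat_0)
  qed
qed

lemma meval_word_two_odd:
  fixes \<phi> :: "var \<Rightarrow> 'a::comm_ring_1 mat"
  assumes m: "m \<ge> 2" and \<phi>: "graded_eval m \<phi>"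
  shows "meval_word m \<phi> (Zv j # map Yv vs @ Zv j' # rest) = 0"
proof -
  have "word_odd (Zv j # map Yv vs)"
    by (simp add: word_odd_def is_odd_var_def filter_empty_conv)
  then obtain Q where "meval_word m \<phi> (Zv j # map Yv vs) = odd_mat m Q"
    using meval_word_graded[OF m \<phi>, of "Zv j # map Yv vs"] by auto
  moreover obtain Q' where "\<phi> (Zv j') = odd_mat m Q'"
    using graded_eval_Zv[OF m \<phi>] by blast
  ultimately show ?thesis
    using meval_word_append[of m \<phi> "Zv j # map Yv vs" "Zv j' # rest"]
    by (simp add: mmul_assoc[symmetric] mmul_odd_odd)
qed

lemma meval_sum_words: "meval k \<phi> p = (\<Sum>w\<in>fsupp p. (\<lambda>i j. p w * meval_word k \<phi> w i j))"
  by (intro ext) (simp add: meval_def sum_fun_apply)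

lemma even_mat_smult: "(\<lambda>i j. c * even_mat m P i j) = even_mat m (smult c P)"
  by (intro ext) (simp add: even_mat_def)

lemma odd_mat_smult: "(\<lambda>i j. c * odd_mat m P i j) = odd_mat m (smult c P)"
  by (intro ext) (simp add: odd_mat_def)

lemma odd_mat_diff: "odd_mat m A - odd_mat m B = odd_mat m (A - B)"
  by (intro ext) (simp add: odd_mat_def)

lemma even_mat_sum: "(\<Sum>w\<in>A. even_mat m (f w)) = even_mat m (\<Sum>w\<in>A. f w)"
  by (induction A rule: infinite_finite_induct) (simp_all add: even_mat_add)

lemma odd_mat_sum: "(\<Sum>w\<in>A. odd_mat m (f w)) = odd_mat m (\<Sum>w\<in>A. f w)"
  by (induction A rule: infinite_finite_induct) (simp_all add: odd_mat_add)

context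
  fixes m :: nat and \<phi> :: "var \<Rightarrow> 'a::comm_ring_1 mat"
  assumes m: "m \<ge> 2" and \<phi>: "graded_eval m \<phi>"
begin

lemma meval_even_fpoly:
  assumes "even_fpoly p"
  obtains P where "meval m \<phi> p = even_mat m P"
proof -
  have "\<forall>w\<in>fsupp p. \<exists>P. meval_word m \<phi> w = even_mat m P"
    using assms meval_word_graded[OF m \<phi>] unfolding even_fpoly_def fsupp_def
    by (metis mem_Collect_eq)
  then obtain P where P: "\<And>w. w \<in> fsupp p \<Longrightarrow> meval_word m \<phi> w = even_mat m (P w)"
    by metis
  have "meval m \<phi> p = even_mat m (\<Sum>w\<in>fsupp p. smult (p w) (P w))"
    unfolding meval_sum_words even_mat_sum[symmetric]
    by (intro sum.cong) (simp_all add: P even_mat_smult)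
  then show thesis
    by (rule that)
qed

lemma meval_odd_fpoly:
  assumes "odd_fpoly p"
  obtains Q where "meval m \<phi> p = odd_mat m Q"
proof -
  have "\<forall>w\<in>fsupp p. \<exists>Q. meval_word m \<phi> w = odd_mat m Q"
    using assms meval_word_graded[OF m \<phi>] unfolding odd_fpoly_def fsupp_def
    by (metis mem_Collect_eq)
  then obtain Q where Q: "\<And>w. w \<in> fsupp p \<Longrightarrow> meval_word m \<phi> w = odd_mat m (Q w)"
    by metis
  have "meval m \<phi> p = odd_mat m (\<Sum>w\<in>fsupp p. smult (p w) (Q w))"
    unfolding meval_sum_words odd_mat_sum[symmetric]
    by (intro sum.cong) (simp_all add: Q odd_mat_smult)
  then show thesis
    by (rule that)
qed

lemma meval_even_odd:
  obtains P Q where "meval m \<phi> p = even_mat m P + odd_mat m Q"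
proof -
  have "\<forall>w\<in>fsupp p. \<exists>PQ. meval_word m \<phi> w = even_mat m (fst PQ) + odd_mat m (snd PQ)"
  proof
    fix w
    show "\<exists>PQ. meval_word m \<phi> w = even_mat m (fst PQ) + odd_mat m (snd PQ)"
      using meval_word_graded[OF m \<phi>, of w]
      by (cases "word_odd w")
          (metis add_0 add.right_neutral even_mat_0 odd_mat_0 fst_conv snd_conv)+
  qed
  then obtain f where f:
    "\<And>w. w \<in> fsupp p \<Longrightarrow> meval_word m \<phi> w = even_mat m (fst (f w)) + odd_mat m (snd (f w))"
    by metis
  have "meval m \<phi> p = (\<Sum>w\<in>fsupp p.
      even_mat m (smult (p w) (fst (f w))) + odd_mat m (smult (p w) (snd (f w))))"
    unfolding meval_sum_words
    by (intro sum.cong) (simp_all add: f distrib_left even_mat_smult[symmetric]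
        odd_mat_smult[symmetric] plus_fun_def)
  then have "meval m \<phi> p = even_mat m (\<Sum>w\<in>fsupp p. smult (p w) (fst (f w)))
      + odd_mat m (\<Sum>w\<in>fsupp p. smult (p w) (snd (f w)))"
    by (simp add: even_mat_sum odd_mat_sum sum.distrib)
  then show thesis
    by (rule that)
qed

lemma graded_eval_meval_subst:
  assumes \<sigma>: "graded_subst \<sigma>"
  shows "graded_eval m (\<lambda>x. meval m \<phi> (\<sigma> x))"
proof -
  have "even_fpoly (\<sigma> (Yv i))" "odd_fpoly (\<sigma> (Zv i))" for i
    using \<sigma> by (auto simp: graded_subst_def is_odd_var_def)
  then show ?thesis
    using meval_even_fpoly meval_odd_fpoly m
    by (metis (no_types, lifting) graded_eval_def even_mat_in_Neven odd_mat_in_Nodd)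
qed

end

text \<open>Both \<^const>\<open>IdN\<close> and the polynomials with all values in \<open>F e\<^sub>1\<^sub>m\<close> are of this form.\<close>
definition graded_preimage :: "nat \<Rightarrow> 'a::comm_ring_1 mat set \<Rightarrow> 'a fpoly set" where
  "graded_preimage m I = {p \<in> fpolys. \<forall>\<phi>. graded_eval m \<phi> \<longrightarrow> meval m \<phi> p \<in> I}"

context
  fixes m :: nat and I :: "'a::comm_ring_1 mat set"
  assumes m: "m \<ge> 2"
    and ideal: "\<And>A P Q. A \<in> I \<Longrightarrow>
      mmul m (even_mat m P + odd_mat m Q) A \<in> I \<and> mmul m A (even_mat m P + odd_mat m Q) \<in> I"
begin

lemma graded_preimage_fmul:
  assumes p: "p \<in> graded_preimage m I" and q: "q \<in> fpolys"
  shows "fmul q p \<in> graded_preimage m I" "fmul p q \<in> graded_preimage m I"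
proof -
  have "meval m \<phi> (fmul q p) \<in> I \<and> meval m \<phi> (fmul p q) \<in> I" if \<phi>: "graded_eval m \<phi>" for \<phi>
  proof -
    obtain P Q where "meval m \<phi> q = even_mat m P + odd_mat m Q"
      using meval_even_odd[OF m \<phi>] by blast
    then show ?thesis
      using p q \<phi> ideal by (auto simp: graded_preimage_def meval_fmul)
  qed
  then show "fmul q p \<in> graded_preimage m I" "fmul p q \<in> graded_preimage m I"
    using p q by (auto simp: graded_preimage_def)
qed

lemma T2_closed_graded_preimage:
  assumes I0: "0 \<in> I"
    and add: "\<And>A B. A \<in> I \<Longrightarrow> B \<in> I \<Longrightarrow> A + B \<in> I"
    and smult: "\<And>A c. A \<in> I \<Longrightarrow> (\<lambda>i j. c * A i j) \<in> I"
  shows "T2_closed (graded_preimage m I)"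
  unfolding T2_closed_def
proof (intro conjI ballI allI impI)
  show "graded_preimage m I \<subseteq> fpolys" "fzero \<in> graded_preimage m I"
    by (auto simp: graded_preimage_def fzero_eq_0 I0)
next
  fix p q :: "'a fpoly"
  assume "p \<in> graded_preimage m I" "q \<in> graded_preimage m I"
  then show "fadd p q \<in> graded_preimage m I"
    by (auto simp: graded_preimage_def fadd_eq_plus meval_add add)
next
  fix c and p :: "'a fpoly"
  assume "p \<in> graded_preimage m I"
  then show "fsmult c p \<in> graded_preimage m I"
    by (auto simp: graded_preimage_def meval_smult smult)
next
  fix p q :: "'a fpoly"
  assume "p \<in> graded_preimage m I" "q \<in> fpolys"
  then show "fmul q p \<in> graded_preimage m I" "fmul p q \<in> graded_preimage m I"
    by (rule graded_preimage_fmul)+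
next
  fix \<sigma> :: "var \<Rightarrow> 'a fpoly" and p
  assume \<sigma>: "graded_subst \<sigma>" and p: "p \<in> graded_preimage m I"
  have "\<And>x. \<sigma> x \<in> fpolys"
    using \<sigma> by (simp add: graded_subst_def)
  with p show "fsubst \<sigma> p \<in> graded_preimage m I"
    by (auto simp: graded_preimage_def meval_fsubst fpolys_fsubst graded_eval_meval_subst[OF m _ \<sigma>])
qed

end

lemma IdN_eq_graded_preimage: "IdN m = graded_preimage m {0}"
  by (simp add: IdN_def graded_preimage_def zero_fun_def)

lemma T2_closed_IdN: "m \<ge> 2 \<Longrightarrow> T2_closed (IdN m :: 'a::comm_ring_1 fpoly set)"
  unfolding IdN_eq_graded_preimage
  by (rule T2_closed_graded_preimage) (simp_all, simp add: fun_eq_iff)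

lemma T2_closed_corner_preimage:
  assumes m: "m \<ge> 2"
  shows "T2_closed (graded_preimage m (range (corner_mat m)) :: 'a::comm_ring_1 fpoly set)"
proof (rule T2_closed_graded_preimage[OF m])
  fix A :: "'a mat" and P Q
  assume "A \<in> range (corner_mat m)"
  then show "mmul m (even_mat m P + odd_mat m Q) A \<in> range (corner_mat m)
      \<and> mmul m A (even_mat m P + odd_mat m Q) \<in> range (corner_mat m)"
    using m by (auto simp: mmul_add_left mmul_add_right mmul_even_corner mmul_odd_corner
        mmul_corner_even mmul_corner_odd)
next
  have "0 = corner_mat m (0 :: 'a)"
    by (intro ext) (simp add: corner_mat_def)
  then show "(0 :: 'a mat) \<in> range (corner_mat m)"
    by (rule range_eqI)
next
  fix A B :: "'a mat"
  assume "A \<in> range (corner_mat m)" "B \<in> range (corner_mat m)"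
  moreover have "corner_mat m a + corner_mat m b = corner_mat m (a + b)" for a b :: 'a
    by (intro ext) (simp add: corner_mat_def)
  ultimately show "A + B \<in> range (corner_mat m)"
    by auto
next
  fix A :: "'a mat" and c :: 'a
  assume "A \<in> range (corner_mat m)"
  moreover have "(\<lambda>i j. c * corner_mat m a i j) = corner_mat m (c * a)" for a
    by (intro ext) (simp add: corner_mat_def)
  ultimately show "(\<lambda>i j. c * A i j) \<in> range (corner_mat m)"
    by auto
qed

lemma meval_zero_eval: "p \<in> fpolys \<Longrightarrow> meval m (\<lambda>x. 0) p = (\<lambda>i j. p [] * midt m i j)"
proof (intro ext)
  fix i j
  assume "p \<in> fpolys"
  have "meval m (\<lambda>x. 0) p i j = (\<Sum>w\<in>fsupp p. if w = [] then p w * midt m i j else 0)"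
    unfolding meval_def by (intro sum.cong) (auto simp: neq_Nil_conv)
  also have "\<dots> = p [] * midt m i j"
    using \<open>p \<in> fpolys\<close> by (cases "p [] = 0") (auto simp: fsupp_def fpolys_def)
  finally show "meval m (\<lambda>x. 0) p i j = p [] * midt m i j" .
qed

text \<open>Evaluating at zero shows that these polynomials have no constant term.\<close>
lemma corner_preimage_subset_CN:
  assumes m: "m \<ge> 2"
  shows "graded_preimage m (range (corner_mat m)) \<subseteq> (CN m :: 'a::comm_ring_1 fpoly set)"
proof
  fix p :: "'a fpoly"
  assume p: "p \<in> graded_preimage m (range (corner_mat m))"
  have "graded_eval m (\<lambda>x. 0 :: 'a mat)"
    by (rule graded_evalI[OF m, of _ "\<lambda>_. 0" "\<lambda>_. 0"]) simp_all
  then obtain c where c: "meval m (\<lambda>x. 0) p = corner_mat m c"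
    using p unfolding graded_preimage_def by blast
  have "p [] = meval m (\<lambda>x. 0) p 0 0"
    using m p by (simp add: graded_preimage_def meval_zero_eval midt_def)
  also have "\<dots> = 0"
    using m by (simp add: c corner_mat_def)
  moreover have "meval m \<phi> p \<in> Ncenter m" if "graded_eval m \<phi>" for \<phi>
    using p that corner_mat_in_Ncenter[OF m] unfolding graded_preimage_def
    by (metis (mono_tags) mem_Collect_eq rangeE)
  ultimately show "p \<in> CN m"
    using p by (simp add: CN_def graded_preimage_def)
qed

section \<open>The generators\<close>

lemma T2_ideal_least: "S \<subseteq> I \<Longrightarrow> T2_closed I \<Longrightarrow> T2_ideal S \<subseteq> I"
  unfolding T2_ideal_def by blast

lemma T2_closed_fpolys: "T2_closed (fpolys :: 'a::comm_ring_1 fpoly set)"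
  unfolding T2_closed_def
  by (intro conjI ballI allI impI)
      (auto simp: fzero_eq_0 fadd_eq_plus graded_subst_def intro: fpolys_fsubst)

lemma T2_closed_T2_ideal:
  assumes "S \<subseteq> fpolys"
  shows "T2_closed (T2_ideal S)"
proof -
  have F: "fpolys \<in> {I. S \<subseteq> I \<and> T2_closed I}"
    using assms T2_closed_fpolys by blast
  show ?thesis
    unfolding T2_closed_def
  proof (intro conjI ballI allI impI)
    show "T2_ideal S \<subseteq> fpolys"
      using F unfolding T2_ideal_def by blast
  qed (auto simp: T2_ideal_def T2_closed_def)
qed

lemma subset_T2_ideal: "S \<subseteq> T2_ideal S"
  unfolding T2_ideal_def by blast

locale T2_closed_set =
  fixes I :: "'a::comm_ring_1 fpoly set"
  assumes T2_closed: "T2_closed I"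
begin

lemma zero_mem: "0 \<in> I"
  using T2_closed by (simp add: T2_closed_def fzero_eq_0)

lemma add_mem: "p \<in> I \<Longrightarrow> q \<in> I \<Longrightarrow> p + q \<in> I"
  using T2_closed by (simp add: T2_closed_def fadd_eq_plus)

lemma smult_mem: "p \<in> I \<Longrightarrow> fsmult c p \<in> I"
  using T2_closed by (simp add: T2_closed_def)

lemma fmul_left_mem: "p \<in> I \<Longrightarrow> q \<in> fpolys \<Longrightarrow> fmul q p \<in> I"
  using T2_closed by (simp add: T2_closed_def)

lemma fmul_right_mem: "p \<in> I \<Longrightarrow> q \<in> fpolys \<Longrightarrow> fmul p q \<in> I"
  using T2_closed by (simp add: T2_closed_def)

lemma fsubst_mem: "graded_subst \<sigma> \<Longrightarrow> p \<in> I \<Longrightarrow> fsubst \<sigma> p \<in> I"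
  using T2_closed by (simp add: T2_closed_def)

lemma diff_mem: "p \<in> I \<Longrightarrow> q \<in> I \<Longrightarrow> p - q \<in> I"
proof -
  assume "p \<in> I" "q \<in> I"
  moreover have "fsmult (-1) q = - q"
    by (rule ext) (simp add: fsmult_def)
  ultimately show "p - q \<in> I"
    using add_mem[of p "fsmult (-1) q"] smult_mem[of q "-1"] by simp
qed

lemma sum_mem: "(\<And>x. x \<in> A \<Longrightarrow> f x \<in> I) \<Longrightarrow> sum f A \<in> I"
  by (induction A rule: infinite_finite_induct) (auto intro: add_mem zero_mem)

lemma sum_list_mem: "(\<And>x. x \<in> set xs \<Longrightarrow> f x \<in> I) \<Longrightarrow> sum_list (map f xs) \<in> I"
  by (induction xs) (auto intro: add_mem zero_mem)

lemma fcomm_list_mem: "p \<in> I \<Longrightarrow> set qs \<subseteq> fpolys \<Longrightarrow> fcomm_list p qs \<in> I"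
  unfolding fcomm_list_def
  by (induction qs arbitrary: p) (auto simp: fcomm_eq intro: diff_mem fmul_left_mem fmul_right_mem)

end

definition T2_gens :: "nat \<Rightarrow> 'a::comm_ring_1 fpoly set" where
  "T2_gens d = {fcomm (fvar (Yv 1)) (fvar (Yv 2)),
    fcomm_list (fvar (Zv 0)) (map (\<lambda>i. fvar (Yv i)) [1..<Suc d]),
    fmul (fvar (Zv 1)) (fvar (Zv 2))}"

lemma T2_gens_fpolys: "T2_gens d \<subseteq> fpolys"
  by (auto simp: T2_gens_def intro!: fpolys_fcomm_list fpolys_fcomm fpolys_fmul)

lemma poly_minus_const: "\<exists>S. P - [:coeff P 0:] = monom 1 1 * (S :: 'a::comm_ring_1 poly)"
proof -
  obtain a q where "P = pCons a q"
    by (rule pCons_cases)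
  then have "P - [:coeff P 0:] = monom 1 1 * q"
    by (simp add: monom_Suc)
  then show ?thesis
    by blast
qed

context
  fixes m :: nat and \<phi> :: "var \<Rightarrow> 'a::comm_ring_1 mat"
  assumes m: "m \<ge> 2" and \<phi>: "graded_eval m \<phi>"
begin

text \<open>Commuting with an even element multiplies the polynomial of an odd element by a
  polynomial without constant term, i.e.\ moves it one step further away from the diagonal.\<close>
lemma meval_fcomm_list_Yv:
  "p \<in> fpolys \<Longrightarrow> meval m \<phi> p = odd_mat m (monom 1 l * R) \<Longrightarrow>
    \<exists>R'. meval m \<phi> (fcomm_list p (map (\<lambda>i. fvar (Yv i)) ys))
        = odd_mat m (monom 1 (l + length ys) * R')"
proof (induction ys arbitrary: p l R)
  case Nil
  then show ?case
    by (auto simp: fcomm_list_def)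
next
  case (Cons y ys)
  obtain P where P: "\<phi> (Yv y) = even_mat m P"
    using graded_eval_Yv[OF m \<phi>] by blast
  obtain S where S: "P - [:coeff P 0:] = monom 1 1 * S"
    using poly_minus_const by blast
  have m1: "m \<ge> 1"
    using m by simp
  have "meval m \<phi> (fcomm p (fvar (Yv y)))
      = odd_mat m (monom 1 l * R * P) - odd_mat m (smult (coeff P 0) (monom 1 l * R))"
    using Cons.prems m1
    by (simp add: meval_fcomm meval_fvar_graded[OF m \<phi>] P mmul_odd_even mmul_even_odd)
  also have "\<dots> = odd_mat m (monom 1 l * R * (P - [:coeff P 0:]))"
    by (simp add: odd_mat_diff algebra_simps)
  also have "\<dots> = odd_mat m (monom 1 (Suc l) * (R * S))"
    by (simp add: S mult_monom algebra_simps)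
  finally show ?case
    using Cons.IH[of "fcomm p (fvar (Yv y))" "Suc l" "R * S"] Cons.prems
    by (auto simp: fcomm_list_Cons)
qed

lemma meval_T2_gens:
  shows "meval m \<phi> (fcomm (fvar (Yv 1)) (fvar (Yv 2))) = 0"
    and "meval m \<phi> (fmul (fvar (Zv 1)) (fvar (Zv 2))) = 0"
    and "\<exists>R. meval m \<phi> (fcomm_list (fvar (Zv 0)) (map (\<lambda>i. fvar (Yv i)) [1..<Suc d]))
           = odd_mat m (monom 1 d * R)"
proof -
  have m1: "m \<ge> 1"
    using m by simp
  note fv = meval_fvar_graded[OF m \<phi>]
  obtain P1 P2 where "\<phi> (Yv 1) = even_mat m P1" "\<phi> (Yv 2) = even_mat m P2"
    using graded_eval_Yv[OF m \<phi>] by metis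
  then show "meval m \<phi> (fcomm (fvar (Yv 1)) (fvar (Yv 2))) = 0"
    using m1 by (simp add: meval_fcomm fv mmul_even_even mult.commute)
  obtain Q1 Q2 where "\<phi> (Zv 1) = odd_mat m Q1" "\<phi> (Zv 2) = odd_mat m Q2"
    using graded_eval_Zv[OF m \<phi>] by metis
  then show "meval m \<phi> (fmul (fvar (Zv 1)) (fvar (Zv 2))) = 0"
    by (simp add: meval_fmul fv mmul_odd_odd)
  obtain Q0 where "\<phi> (Zv 0) = odd_mat m Q0"
    using graded_eval_Zv[OF m \<phi>] by metis
  then have "meval m \<phi> (fvar (Zv 0)) = odd_mat m (monom 1 0 * Q0)"
    by (simp add: fv)
  from meval_fcomm_list_Yv[OF _ this, of "[1..<Suc d]"]
  show "\<exists>R. meval m \<phi> (fcomm_list (fvar (Zv 0)) (map (\<lambda>i. fvar (Yv i)) [1..<Suc d]))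
      = odd_mat m (monom 1 d * R)"
    by (simp del: upt_Suc)
qed

end

lemma odd_mat_monom_eq_0: "odd_mat (Suc d) (monom 1 d * R) = 0"
  by (intro ext) (auto simp: odd_mat_def coeff_monom_mult)

lemma odd_mat_monom_eq_corner:
  "odd_mat (Suc (Suc d)) (monom 1 d * R) = corner_mat (Suc (Suc d)) (coeff R 0)"
  by (intro ext) (auto simp: odd_mat_def corner_mat_def coeff_monom_mult)

lemma T2_ideal_gens_subset_IdN:
  assumes d: "d \<ge> 1"
  shows "T2_ideal (T2_gens d) \<subseteq> (IdN (Suc d) :: 'a::comm_ring_1 fpoly set)"
proof (rule T2_ideal_least)
  have m: "Suc d \<ge> 2"
    using d by simp
  then show "T2_closed (IdN (Suc d) :: 'a fpoly set)"
    by (rule T2_closed_IdN)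
  have "meval (Suc d) \<phi> p = 0" if \<phi>: "graded_eval (Suc d) \<phi>" and p: "p \<in> T2_gens d"
    for \<phi> :: "var \<Rightarrow> 'a mat" and p
  proof -
    obtain R where "meval (Suc d) \<phi> (fcomm_list (fvar (Zv 0)) (map (\<lambda>i. fvar (Yv i)) [1..<Suc d]))
        = odd_mat (Suc d) (monom 1 d * R)"
      using meval_T2_gens(3)[OF m \<phi>] by blast
    then show ?thesis
      using meval_T2_gens(1,2)[OF m \<phi>] odd_mat_monom_eq_0 p
      by (auto simp: T2_gens_def simp del: upt_Suc)
  qed
  then show "T2_gens d \<subseteq> (IdN (Suc d) :: 'a fpoly set)"
    using T2_gens_fpolys by (auto simp: IdN_eq_graded_preimage graded_preimage_def)
qed

lemma T2_ideal_gens_subset_CN: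
  "T2_ideal (T2_gens d) \<subseteq> (CN (Suc (Suc d)) :: 'a::comm_ring_1 fpoly set)"
proof -
  have m: "Suc (Suc d) \<ge> 2"
    by simp
  have "meval (Suc (Suc d)) \<phi> p \<in> range (corner_mat (Suc (Suc d)))"
    if \<phi>: "graded_eval (Suc (Suc d)) \<phi>" and p: "p \<in> T2_gens d" for \<phi> :: "var \<Rightarrow> 'a mat" and p
  proof -
    have "(0 :: 'a mat) = corner_mat (Suc (Suc d)) 0"
      by (intro ext) (simp add: corner_mat_def)
    moreover obtain R where "meval (Suc (Suc d)) \<phi>
        (fcomm_list (fvar (Zv 0)) (map (\<lambda>i. fvar (Yv i)) [1..<Suc d]))
        = odd_mat (Suc (Suc d)) (monom 1 d * R)"
      using meval_T2_gens(3)[OF m \<phi>] by blast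
    ultimately show ?thesis
      using meval_T2_gens(1,2)[OF m \<phi>] p
      by (auto simp: T2_gens_def odd_mat_monom_eq_corner simp del: upt_Suc)
  qed
  then have "T2_gens d
      \<subseteq> (graded_preimage (Suc (Suc d)) (range (corner_mat (Suc (Suc d)))) :: 'a fpoly set)"
    using T2_gens_fpolys by (auto simp: graded_preimage_def)
  then show ?thesis
    using T2_ideal_least[OF _ T2_closed_corner_preimage[OF m]] corner_preimage_subset_CN[OF m]
    by blast
qed

section \<open>Normal forms modulo the generators\<close>

abbreviation yvar :: "nat \<Rightarrow> 'a::comm_ring_1 fpoly" where
  "yvar i \<equiv> fvar (Yv i)"

definition ymonom :: "nat list \<Rightarrow> 'a::comm_ring_1 fpoly" where
  "ymonom l = fmonom (map Yv l)"

definition zcomm :: "nat \<Rightarrow> nat list \<Rightarrow> 'a::comm_ring_1 fpoly" where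
  "zcomm j l = fcomm_list (fvar (Zv j)) (map yvar l)"

lemma fpolys_ymonom [simp]: "ymonom l \<in> fpolys"
  by (simp add: ymonom_def)

lemma fpolys_map_yvar [simp]: "set (map yvar l) \<subseteq> fpolys"
  by auto

lemma fpolys_zcomm [simp]: "zcomm j l \<in> fpolys"
  unfolding zcomm_def by (intro fpolys_fcomm_list) auto

lemma ymonom_Nil: "ymonom [] = fone"
  by (simp add: ymonom_def fmonom_Nil)

lemma ymonom_Cons: "ymonom (i # l) = fmul (yvar i) (ymonom l)"
  by (simp add: ymonom_def fmonom_Cons)

lemma ymonom_append: "ymonom (u @ v) = fmul (ymonom u) (ymonom v)"
  by (simp add: ymonom_def fmonom_append)

fun splits :: "nat list \<Rightarrow> (nat list \<times> nat list) list" where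
  "splits [] = [([], [])]"
| "splits (y # v)
  = map (\<lambda>p. (fst p, y # snd p)) (splits v) @ map (\<lambda>p. (y # fst p, snd p)) (splits v)"

text \<open>Moving the even variables of \<open>X y\<^sub>1 \<dots> y\<^sub>n\<close> to the left one at a time, using
  \<open>X y = [X, y] + y X\<close>.\<close>
lemma fmul_ymonom_splits:
  fixes X :: "'a::comm_ring_1 fpoly"
  shows "X \<in> fpolys \<Longrightarrow> fmul X (ymonom vs)
    = sum_list (map (\<lambda>p. fmul (ymonom (fst p)) (fcomm_list X (map yvar (snd p)))) (splits vs))"
proof (induction vs arbitrary: X)
  case Nil
  then show ?case
    by (simp add: ymonom_Nil fcomm_list_def)
next
  case (Cons y vs)
  have cX: "fcomm X (yvar y) \<in> fpolys"
    using Cons.prems by (intro fpolys_fcomm) auto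
  have "fmul X (ymonom (y # vs)) = fmul (fcomm X (yvar y) + fmul (yvar y) X) (ymonom vs)"
    by (simp add: ymonom_Cons fmul_assoc fcomm_eq)
  also have "\<dots> = fmul (fcomm X (yvar y)) (ymonom vs) + fmul (yvar y) (fmul X (ymonom vs))"
    by (simp add: fmul_add_left fmul_assoc)
  also have "fmul (fcomm X (yvar y)) (ymonom vs)
      = sum_list (map (\<lambda>p. fmul (ymonom (fst p)) (fcomm_list X (map yvar (snd p))))
          (map (\<lambda>p. (fst p, y # snd p)) (splits vs)))"
    by (simp add: Cons.IH[OF cX] fcomm_list_Cons o_def)
  also have "fmul (yvar y) (fmul X (ymonom vs))
      = sum_list (map (\<lambda>p. fmul (ymonom (fst p)) (fcomm_list X (map yvar (snd p))))
          (map (\<lambda>p. (y # fst p, snd p)) (splits vs)))"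
    by (simp add: Cons.IH[OF Cons.prems] fmul_sum_list_right o_def ymonom_Cons fmul_assoc)
  finally show ?case
    by simp
qed

lemma mset_eq_induct:
  assumes "mset xs = mset ys"
    and refl: "\<And>x. R x x" and trans: "\<And>x y z. R x y \<Longrightarrow> R y z \<Longrightarrow> R x z"
    and cons: "\<And>c x y. R x y \<Longrightarrow> R (c # x) (c # y)"
    and swap: "\<And>u a b v. R (u @ a # b # v) (u @ b # a # v)"
  shows "R xs ys"
  using assms(1)
proof (induction xs arbitrary: ys)
  case Nil
  then show ?case
    using refl by simp
next
  case (Cons x xs)
  then have "x \<in> set ys"
    by (metis list.set_intros(1) set_mset_mset)
  then obtain ys1 ys2 where ys: "ys = ys1 @ x # ys2"
    by (meson split_list)
  have "mset xs = mset (ys1 @ ys2)"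
    using Cons.prems ys by simp
  then have "R (x # xs) (x # ys1 @ ys2)"
    using Cons.IH cons by blast
  moreover have "R (x # zs1 @ zs2) (zs1 @ x # zs2)" for zs1 zs2
  proof (induction zs1)
    case Nil
    then show ?case
      using refl by simp
  next
    case (Cons c zs1)
    have "R (x # c # zs1 @ zs2) (c # x # zs1 @ zs2)"
      using swap[of "[]" x c] by simp
    moreover have "R (c # x # zs1 @ zs2) (c # zs1 @ x # zs2)"
      using cons Cons.IH by blast
    ultimately show ?case
      using trans by simp
  qed
  ultimately show ?case
    using trans ys by blast
qed

fun y_indices :: "var list \<Rightarrow> nat list option" where
  "y_indices [] = Some []"
| "y_indices (Yv i # w) = map_option (Cons i) (y_indices w)"
| "y_indices (Zv j # w) = None"

lemma y_indices_map_Yv: "y_indices (map Yv vs) = Some vs"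
  by (induction vs) auto

lemma y_indices_Some: "y_indices w = Some vs \<Longrightarrow> w = map Yv vs"
  by (induction w arbitrary: vs rule: y_indices.induct) auto

lemma y_indices_None: "y_indices w = None \<Longrightarrow> \<exists>vs j rest. w = map Yv vs @ Zv j # rest"
proof (induction w rule: y_indices.induct)
  case (2 i w)
  then obtain vs j rest where "w = map Yv vs @ Zv j # rest"
    by auto
  then have "Yv i # w = map Yv (i # vs) @ Zv j # rest"
    by simp
  then show ?case
    by blast
next
  case (3 j w)
  have "Zv j # w = map Yv [] @ Zv j # w"
    by simp
  then show ?case
    by blast
qed simp

text \<open>A key \<open>(None, \<mu>, {#})\<close> stands for the monomial \<open>y\<^sup>\<mu>\<close> and a key \<open>(Some j, \<mu>, \<nu>)\<close> for
  \<open>y\<^sup>\<mu> [z\<^sub>j, y\<^sup>\<nu>]\<close>, both with the indices in increasing order.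
  Modulo the generators, a word \<open>w\<close> is the sum of the key polynomials listed by
  \<open>nf_keys d w\<close>, where \<open>d\<close> is the length of the long commutator among the generators.\<close>
type_synonym nf_key = "nat option \<times> nat multiset \<times> nat multiset"

fun nf_keys :: "nat \<Rightarrow> var list \<Rightarrow> nf_key list" where
  "nf_keys d [] = [(None, {#}, {#})]"
| "nf_keys d (Yv i # w)
  = map (\<lambda>key. (fst key, add_mset i (fst (snd key)), snd (snd key))) (nf_keys d w)"
| "nf_keys d (Zv j # w) = (case y_indices w of None \<Rightarrow> []
      | Some vs \<Rightarrow> map (\<lambda>p. (Some j, mset (fst p), mset (snd p)))
          (filter (\<lambda>p. length (snd p) < d) (splits vs)))"

definition key_poly :: "nf_key \<Rightarrow> 'a::comm_ring_1 fpoly" where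
  "key_poly key = fmul (ymonom (sorted_list_of_multiset (fst (snd key))))
     (case fst key of None \<Rightarrow> fone | Some j \<Rightarrow> zcomm j (sorted_list_of_multiset (snd (snd key))))"

definition nf_poly :: "nat \<Rightarrow> var list \<Rightarrow> 'a::comm_ring_1 fpoly" where
  "nf_poly d w = sum_list (map key_poly (nf_keys d w))"

definition nf_coeff :: "nat \<Rightarrow> 'a::comm_semiring_1 fpoly \<Rightarrow> nf_key \<Rightarrow> 'a" where
  "nf_coeff d p key = (\<Sum>w\<in>fsupp p. p w * of_nat (count_list (nf_keys d w) key))"

definition nf_keys_of :: "nat \<Rightarrow> 'a::comm_semiring_1 fpoly \<Rightarrow> nf_key set" where
  "nf_keys_of d p = (\<Union>w\<in>fsupp p. set (nf_keys d w))"

lemma finite_nf_keys_of: "p \<in> fpolys \<Longrightarrow> finite (nf_keys_of d p)"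
  by (simp add: nf_keys_of_def finite_fsupp)

lemma nf_coeff_eq_0: "key \<notin> nf_keys_of d p \<Longrightarrow> nf_coeff d p key = 0"
  by (auto simp: nf_coeff_def nf_keys_of_def count_list_0_iff intro!: sum.neutral)

lemma sum_list_eq_sum_count_list:
  assumes "finite X" "set xs \<subseteq> X"
  shows "sum_list (map g xs) = (\<Sum>x\<in>X. of_nat (count_list xs x) * (g x :: 'a::comm_semiring_1))"
  using assms(2)
proof (induction xs)
  case Nil
  then show ?case
    by simp
next
  case (Cons y xs)
  have "(\<Sum>x\<in>X. of_nat (count_list (y # xs) x) * g x)
      = (\<Sum>x\<in>X. (if x = y then g x else 0) + of_nat (count_list xs x) * g x)"
    by (intro sum.cong) (auto simp: algebra_simps)
  also have "\<dots> = g y + (\<Sum>x\<in>X. of_nat (count_list xs x) * g x)"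
    using Cons.prems assms(1) by (simp add: sum.distrib sum.delta')
  finally show ?case
    using Cons by simp
qed

lemma sum_nf_keys_regroup:
  assumes p: "p \<in> fpolys"
  shows "(\<Sum>w\<in>fsupp p. p w * sum_list (map g (nf_keys d w)))
    = (\<Sum>key\<in>nf_keys_of d p. nf_coeff d p key * g key)"
proof -
  have "(\<Sum>w\<in>fsupp p. p w * sum_list (map g (nf_keys d w)))
      = (\<Sum>w\<in>fsupp p. p w * (\<Sum>key\<in>nf_keys_of d p. of_nat (count_list (nf_keys d w) key) * g key))"
    using finite_nf_keys_of[OF p]
    by (intro sum.cong refl, subst sum_list_eq_sum_count_list) (auto simp: nf_keys_of_def)
  also have "\<dots>
      = (\<Sum>key\<in>nf_keys_of d p. \<Sum>w\<in>fsupp p. p w * of_nat (count_list (nf_keys d w) key) * g key)"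
    by (simp add: sum_distrib_left mult.assoc) (rule sum.swap)
  also have "\<dots> = (\<Sum>key\<in>nf_keys_of d p. nf_coeff d p key * g key)"
    by (simp add: nf_coeff_def sum_distrib_right)
  finally show ?thesis .
qed

locale T2_closed_gens = T2_closed_set +
  fixes d :: nat
  assumes gens: "T2_gens d \<subseteq> I"
begin

lemma fcomm_yvar_mem: "fcomm (yvar a) (yvar b) \<in> I"
proof -
  define \<sigma> :: "var \<Rightarrow> 'a fpoly" where
    "\<sigma> x = (if x = Yv 1 then yvar a else if x = Yv 2 then yvar b else fvar x)" for x
  have "graded_subst \<sigma>"
    by (rule graded_substI) (auto simp: \<sigma>_def even_fpoly_fvar odd_fpoly_fvar is_odd_var_def)
  moreover have "fcomm (yvar 1) (yvar 2) \<in> I"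
    using gens by (auto simp: T2_gens_def)
  ultimately show ?thesis
    using fsubst_mem by (fastforce simp: fsubst_fcomm fsubst_fvar \<sigma>_def)
qed

lemma ymonom_perm_mem:
  assumes "mset l = mset l'"
  shows "ymonom l - ymonom l' \<in> I"
  using assms
proof (rule mset_eq_induct[where R = "\<lambda>l l'. ymonom l - ymonom l' \<in> I"])
  show "ymonom x - ymonom x \<in> I" for x
    using zero_mem by simp
  show "ymonom x - ymonom z \<in> I" if "ymonom x - ymonom y \<in> I" "ymonom y - ymonom z \<in> I" for x y z
    using add_mem[OF that] by simp
  show "ymonom (c # x) - ymonom (c # y) \<in> I" if "ymonom x - ymonom y \<in> I" for c x y
    using fmul_left_mem[OF that, of "yvar c"] by (simp add: ymonom_Cons fmul_diff_right)
  show "ymonom (u @ a # b # v) - ymonom (u @ b # a # v) \<in> I" for u a b v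
  proof -
    have "ymonom (u @ a # b # v) - ymonom (u @ b # a # v)
        = (fmul (ymonom u) (fmul (fcomm (yvar a) (yvar b)) (ymonom v)) :: 'a fpoly)"
      by (simp add: ymonom_append ymonom_Cons fcomm_eq fmul_diff_left fmul_diff_right fmul_assoc)
    moreover have "fmul (ymonom u) (fmul (fcomm (yvar a) (yvar b)) (ymonom v)) \<in> I"
      by (rule fmul_left_mem[OF fmul_right_mem[OF fcomm_yvar_mem]]) simp_all
    ultimately show ?thesis
      by simp
  qed
qed

lemma fcomm_list_yvar_swap_mem:
  assumes X: "X \<in> fpolys"
  shows "fcomm_list X (map yvar (u @ a # b # v)) - fcomm_list X (map yvar (u @ b # a # v)) \<in> I"
proof -
  define X' where "X' = fcomm_list X (map yvar u)"
  have X': "X' \<in> fpolys"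
    unfolding X'_def using X by (intro fpolys_fcomm_list) auto
  have "fcomm_list X (map yvar (u @ a # b # v)) - fcomm_list X (map yvar (u @ b # a # v))
      = fcomm_list (fcomm (fcomm X' (yvar a)) (yvar b) - fcomm (fcomm X' (yvar b)) (yvar a))
          (map yvar v)"
    by (simp add: X'_def fcomm_list_append fcomm_list_Cons fcomm_list_diff)
  also have "\<dots> = fcomm_list (fcomm X' (fcomm (yvar a) (yvar b))) (map yvar v)"
    by (simp only: fcomm_fcomm_swap)
  also have "\<dots> \<in> I"
    unfolding fcomm_eq[of X']
    by (intro fcomm_list_mem diff_mem fmul_left_mem fmul_right_mem fcomm_yvar_mem X'
        fpolys_map_yvar)
  finally show ?thesis .
qed

lemma fcomm_list_yvar_perm_mem:
  assumes "mset l = mset l'" "X \<in> fpolys"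
  shows "fcomm_list X (map yvar l) - fcomm_list X (map yvar l') \<in> I"
proof -
  have "\<forall>X\<in>fpolys. fcomm_list X (map yvar l) - fcomm_list X (map yvar l') \<in> I"
    using assms(1)
  proof (rule mset_eq_induct[where
        R = "\<lambda>l l'. \<forall>X\<in>fpolys. fcomm_list X (map yvar l) - fcomm_list X (map yvar l') \<in> I"])
    show "\<forall>X\<in>fpolys. fcomm_list X (map yvar x) - fcomm_list X (map yvar x) \<in> I" for x
      by (simp add: zero_mem)
    show "\<forall>X\<in>fpolys. fcomm_list X (map yvar x) - fcomm_list X (map yvar z) \<in> I"
      if "\<forall>X\<in>fpolys. fcomm_list X (map yvar x) - fcomm_list X (map yvar y) \<in> I"
         "\<forall>X\<in>fpolys. fcomm_list X (map yvar y) - fcomm_list X (map yvar z) \<in> I" for x y z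
      using that add_mem by fastforce
    show "\<forall>X\<in>fpolys. fcomm_list X (map yvar (c # x)) - fcomm_list X (map yvar (c # y)) \<in> I"
      if "\<forall>X\<in>fpolys. fcomm_list X (map yvar x) - fcomm_list X (map yvar y) \<in> I" for c x y
      using that by (simp add: fcomm_list_Cons fpolys_fcomm)
    show "\<forall>X\<in>fpolys. fcomm_list X (map yvar (u @ a # b # v))
        - fcomm_list X (map yvar (u @ b # a # v)) \<in> I"
      for u a b v
      using fcomm_list_yvar_swap_mem by blast
  qed
  then show ?thesis
    using assms(2) by blast
qed

lemma zcomm_long_mem:
  assumes B: "d \<le> length B"
  shows "zcomm j B \<in> I"
proof -
  define \<sigma> :: "var \<Rightarrow> 'a fpoly" where
    "\<sigma> x = (case x of Zv i \<Rightarrow> if i = 0 then fvar (Zv j) else fvar (Zv i)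
              | Yv i \<Rightarrow> if 1 \<le> i \<and> i \<le> d then yvar (B ! (i - 1)) else fvar (Yv i))" for x
  have \<sigma>: "graded_subst \<sigma>"
    by (rule graded_substI)
      (auto simp: \<sigma>_def even_fpoly_fvar odd_fpoly_fvar is_odd_var_def split: var.split)
  have gen: "fcomm_list (fvar (Zv 0)) (map yvar [1..<Suc d]) \<in> I"
    using gens by (auto simp: T2_gens_def)
  have "map (\<lambda>i. \<sigma> (Yv i)) [1..<Suc d] = map yvar (take d B)"
    using B by (intro nth_equalityI) (auto simp: \<sigma>_def simp del: upt_Suc)
  then have "fsubst \<sigma> (fcomm_list (fvar (Zv 0)) (map yvar [1..<Suc d]))
      = fcomm_list (fvar (Zv j)) (map yvar (take d B))"
    by (subst fsubst_fcomm_list) (auto simp: fsubst_fvar \<sigma>_def o_def simp del: upt_Suc)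
  then have "fcomm_list (fvar (Zv j)) (map yvar (take d B)) \<in> I"
    using fsubst_mem[OF \<sigma> gen] by simp
  then have "fcomm_list (fcomm_list (fvar (Zv j)) (map yvar (take d B))) (map yvar (drop d B)) \<in> I"
    by (rule fcomm_list_mem) (rule fpolys_map_yvar)
  then show ?thesis
    by (simp add: zcomm_def fcomm_list_append[symmetric] map_append[symmetric])
qed

lemma fmonom_two_odd_mem: "fmonom (Zv j # map Yv vs @ Zv j' # rest) \<in> I"
proof -
  define \<sigma> :: "var \<Rightarrow> 'a fpoly" where
    "\<sigma> x = (if x = Zv 1 then fmonom (Zv j # map Yv vs)
      else if x = Zv 2 then fvar (Zv j') else fvar x)" for x
  have "word_odd (Zv j # map Yv vs)"
    by (simp add: word_odd_def is_odd_var_def filter_empty_conv)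
  then have \<sigma>: "graded_subst \<sigma>"
    by (intro graded_substI)
        (auto simp: \<sigma>_def even_fpoly_fvar odd_fpoly_fvar is_odd_var_def odd_fpoly_fmonom)
  have "fmul (fvar (Zv 1)) (fvar (Zv 2)) \<in> I"
    using gens by (auto simp: T2_gens_def)
  from fsubst_mem[OF \<sigma> this] have "fmul (fmonom (Zv j # map Yv vs)) (fvar (Zv j')) \<in> I"
    by (simp add: fsubst_fmul fsubst_fvar \<sigma>_def)
  then have "fmul (fmul (fmonom (Zv j # map Yv vs)) (fvar (Zv j'))) (fmonom rest) \<in> I"
    by (rule fmul_right_mem) simp
  then show ?thesis
    by (simp add: fmonom_Cons fmonom_append fmul_assoc)
qed

lemma fmul_yvar_key_poly_mem:
  "fmul (yvar i) (key_poly key) - key_poly (fst key, add_mset i (fst (snd key)), snd (snd key)) \<in> I"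
proof -
  obtain o1 \<mu> \<nu> where key: "key = (o1, \<mu>, \<nu>)"
    by (rule prod_cases3)
  define Z :: "'a fpoly" where
    "Z = (case o1 of None \<Rightarrow> fone | Some j \<Rightarrow> zcomm j (sorted_list_of_multiset \<nu>))"
  have "fmul (yvar i) (key_poly key) - key_poly (fst key, add_mset i (fst (snd key)), snd (snd key))
     = fmul (ymonom (i # sorted_list_of_multiset \<mu>)
         - ymonom (sorted_list_of_multiset (add_mset i \<mu>))) Z"
    unfolding key key_poly_def Z_def
    by (simp only: fst_conv snd_conv ymonom_Cons fmul_assoc fmul_diff_left)
  also have "\<dots> \<in> I"
    by (intro fmul_right_mem ymonom_perm_mem) (auto simp: Z_def split: option.split)
  finally show ?thesis .
qed

lemma zword_minus_nf_poly_mem: "fmonom (Zv j # map Yv vs) - nf_poly d (Zv j # map Yv vs) \<in> I"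
proof -
  define f :: "nat list \<times> nat list \<Rightarrow> 'a fpoly" where
    "f p = fmul (ymonom (fst p)) (zcomm j (snd p))" for p
  define g :: "nat list \<times> nat list \<Rightarrow> 'a fpoly" where
    "g p = (if length (snd p) < d then key_poly (Some j, mset (fst p), mset (snd p)) else 0)" for p
  have "fmonom (Zv j # map Yv vs) = fmul (fvar (Zv j)) (ymonom vs)"
    by (simp add: fmonom_Cons ymonom_def)
  also have "\<dots> = sum_list (map f (splits vs))"
    by (simp add: fmul_ymonom_splits f_def[abs_def] zcomm_def)
  finally have "fmonom (Zv j # map Yv vs) - nf_poly d (Zv j # map Yv vs)
      = sum_list (map (\<lambda>p. f p - g p) (splits vs))"
    by (simp add: nf_poly_def y_indices_map_Yv o_def sum_list_map_filter' g_def sum_list_subtractf)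
  also have "\<dots> \<in> I"
  proof (rule sum_list_mem)
    fix p :: "nat list \<times> nat list"
    show "f p - g p \<in> I"
    proof (cases "length (snd p) < d")
      case True
      define A where "A = sorted_list_of_multiset (mset (fst p))"
      define B where "B = sorted_list_of_multiset (mset (snd p))"
      have "f p - g p = fmul (ymonom (fst p) - ymonom A) (zcomm j (snd p))
          + fmul (ymonom A) (zcomm j (snd p) - zcomm j B)"
        using True
        by (simp add: f_def g_def key_poly_def A_def B_def fmul_diff_left fmul_diff_right)
      also have "\<dots> \<in> I"
      proof (rule add_mem)
        show "fmul (ymonom (fst p) - ymonom A) (zcomm j (snd p)) \<in> I"
          by (rule fmul_right_mem[OF ymonom_perm_mem]) (simp_all add: A_def)
        show "fmul (ymonom A) (zcomm j (snd p) - zcomm j B) \<in> I"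
          unfolding zcomm_def
          by (rule fmul_left_mem[OF fcomm_list_yvar_perm_mem]) (simp_all add: B_def)
      qed
      finally show ?thesis .
    next
      case False
      then show ?thesis
        by (simp add: f_def g_def fmul_left_mem zcomm_long_mem)
    qed
  qed
  finally show ?thesis .
qed

lemma fmonom_minus_nf_poly_mem: "fmonom w - nf_poly d w \<in> I"
proof (induction w)
  case Nil
  then show ?case
    using zero_mem by (simp add: nf_poly_def key_poly_def ymonom_Nil fmonom_Nil zero_fun_def)
next
  case (Cons x w)
  show ?case
  proof (cases x)
    case (Yv i)
    have "fmonom (x # w) - nf_poly d (x # w) = fmul (yvar i) (fmonom w - nf_poly d w)
        + sum_list (map (\<lambda>key. fmul (yvar i) (key_poly key)
            - key_poly (fst key, add_mset i (fst (snd key)), snd (snd key))) (nf_keys d w))"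
      by (simp add: Yv nf_poly_def fmonom_Cons fmul_diff_right fmul_sum_list_right o_def
          sum_list_subtractf)
    also have "\<dots> \<in> I"
      by (intro add_mem fmul_left_mem Cons.IH sum_list_mem fmul_yvar_key_poly_mem) simp
    finally show ?thesis .
  next
    case (Zv j)
    show ?thesis
    proof (cases "y_indices w")
      case None
      then obtain vs j' rest where "w = map Yv vs @ Zv j' # rest"
        using y_indices_None by blast
      then show ?thesis
        using None Zv fmonom_two_odd_mem by (simp add: nf_poly_def)
    next
      case (Some vs)
      then show ?thesis
        using Zv y_indices_Some zword_minus_nf_poly_mem by blast
    qed
  qed
qed

text \<open>\<open>p\<close> is congruent to the sum of the \<open>p w \<cdot> nf_poly d w\<close>, which regroups to the sum of
  the \<open>nf_coeff d p key \<cdot> key_poly key\<close>.\<close>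
lemma mem_if_nf_coeff_eq_0:
  assumes p: "p \<in> fpolys" and coeff: "\<And>key. nf_coeff d p key = 0"
  shows "p \<in> I"
proof -
  have "(\<Sum>w\<in>fsupp p. fsmult (p w) (nf_poly d w)) = 0"
  proof (rule ext)
    fix u
    have "(\<Sum>w\<in>fsupp p. fsmult (p w) (nf_poly d w)) u
        = (\<Sum>w\<in>fsupp p. p w * sum_list (map (\<lambda>key. key_poly key u) (nf_keys d w)))"
      by (simp add: sum_fun_apply fsmult_def nf_poly_def sum_list_fun_apply)
    also have "\<dots> = 0"
      by (simp add: sum_nf_keys_regroup[OF p] coeff)
    finally show "(\<Sum>w\<in>fsupp p. fsmult (p w) (nf_poly d w)) u = 0 u"
      by simp
  qed
  moreover have "p - (\<Sum>w\<in>fsupp p. fsmult (p w) (nf_poly d w))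
      = (\<Sum>w\<in>fsupp p. fsmult (p w) (fmonom w - nf_poly d w))"
  proof (rule ext)
    fix u
    have "p u = (\<Sum>w\<in>fsupp p. fsmult (p w) (fmonom w)) u"
      using fpoly_expansion[OF p] by metis
    then show "(p - (\<Sum>w\<in>fsupp p. fsmult (p w) (nf_poly d w))) u
        = (\<Sum>w\<in>fsupp p. fsmult (p w) (fmonom w - nf_poly d w)) u"
      by (simp add: sum_fun_apply fsmult_def sum_subtractf algebra_simps)
  qed
  moreover have "(\<Sum>w\<in>fsupp p. fsmult (p w) (fmonom w - nf_poly d w)) \<in> I"
    by (intro sum_mem smult_mem fmonom_minus_nf_poly_mem)
  ultimately show ?thesis
    by simp
qed

end

section \<open>Vanishing of the normal-form coefficients\<close>

definition mprod :: "(nat \<Rightarrow> 'a::comm_semiring_1) \<Rightarrow> nat multiset \<Rightarrow> 'a" where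
  "mprod x \<mu> = prod_mset (image_mset x \<mu>)"

lemma mprod_mset: "mprod a (mset l) = prod_list (map a l)"
  by (simp add: mprod_def prod_mset_prod_list[symmetric])

lemma mprod_add_mset: "mprod a (add_mset i \<mu>) = a i * mprod a \<mu>"
  by (simp add: mprod_def)

lemma mprod_split: "mprod x \<mu> = mprod x {#i \<in># \<mu>. i \<noteq> v#} * x v ^ count \<mu> v"
proof -
  have "\<mu> = {#i \<in># \<mu>. i \<noteq> v#} + {#i \<in># \<mu>. i = v#}"
    using multiset_partition[of \<mu> "\<lambda>i. i \<noteq> v"] by simp
  then have "mprod x \<mu> = mprod x {#i \<in># \<mu>. i \<noteq> v#} * mprod x {#i \<in># \<mu>. i = v#}"
    unfolding mprod_def by (metis image_mset_union prod_mset.union)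
  also have "mprod x {#i \<in># \<mu>. i = v#} = x v ^ count \<mu> v"
    by (simp add: mprod_def filter_eq_replicate_mset)
  finally show ?thesis .
qed

lemma mprod_fun_upd: "v \<notin># \<mu> \<Longrightarrow> mprod (x(v := t)) \<mu> = mprod x \<mu>"
  unfolding mprod_def by (metis (mono_tags, lifting) fun_upd_other image_mset_cong)

text \<open>Viewing a vanishing polynomial function as a polynomial in the single variable
  \<open>x\<^sub>v\<close>, each of its coefficients vanishes.\<close>
lemma sum_mprod_eq_0_slice:
  fixes c :: "nat multiset \<Rightarrow> 'a::field_char_0"
  assumes "finite M" and zero: "\<And>x. (\<Sum>\<mu>\<in>M. c \<mu> * mprod x \<mu>) = 0"
  shows "(\<Sum>\<mu>\<in>{\<mu>\<in>M. count \<mu> v = e}. c \<mu> * mprod x {#i \<in># \<mu>. i \<noteq> v#}) = 0"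
proof -
  define P where "P = (\<Sum>\<mu>\<in>M. monom (c \<mu> * mprod x {#i \<in># \<mu>. i \<noteq> v#}) (count \<mu> v))"
  have "poly P t = (\<Sum>\<mu>\<in>M. c \<mu> * mprod (x(v := t)) \<mu>)" for t
    unfolding P_def poly_sum poly_monom
  proof (intro sum.cong refl)
    fix \<mu>
    have "mprod (x(v := t)) \<mu> = mprod x {#i \<in># \<mu>. i \<noteq> v#} * t ^ count \<mu> v"
      using mprod_split[of "x(v := t)" \<mu> v] by (simp add: mprod_fun_upd)
    then show "c \<mu> * mprod x {#i \<in># \<mu>. i \<noteq> v#} * t ^ count \<mu> v = c \<mu> * mprod (x(v := t)) \<mu>"
      by (simp only: mult.assoc)
  qed
  then have "P = 0"
    using zero poly_all_0_iff_0 by metis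
  then have "coeff P e = 0"
    by simp
  moreover have "coeff P e = (\<Sum>\<mu>\<in>M. if count \<mu> v = e then c \<mu> * mprod x {#i \<in># \<mu>. i \<noteq> v#} else 0)"
    unfolding P_def coeff_monom_sum by simp
  ultimately show ?thesis
    using assms(1) by (simp add: sum.inter_filter)
qed

lemma sum_mprod_eq_0_bounded:
  fixes c :: "nat multiset \<Rightarrow> 'a::field_char_0"
  shows "finite M \<Longrightarrow> (\<forall>\<mu>\<in>M. \<forall>i\<in>#\<mu>. i < N) \<Longrightarrow> (\<And>x. (\<Sum>\<mu>\<in>M. c \<mu> * mprod x \<mu>) = 0) \<Longrightarrow>
    \<mu> \<in> M \<Longrightarrow> c \<mu> = 0"
proof (induction N arbitrary: M c \<mu>)
  case 0
  then have "M = {{#}}"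
    by (auto simp: multiset_nonemptyE)
  then show ?case
    using 0 by (simp add: mprod_def)
next
  case (Suc N)
  define rest :: "nat multiset \<Rightarrow> nat multiset" where "rest \<nu> = {#i \<in># \<nu>. i \<noteq> N#}" for \<nu>
  define e where "e = count \<mu> N"
  define M' where "M' = rest ` {\<nu>\<in>M. count \<nu> N = e}"
  define c' where "c' \<nu> = c (\<nu> + replicate_mset e N)" for \<nu>
  have rest: "\<nu> = rest \<nu> + replicate_mset e N" if "count \<nu> N = e" for \<nu>
    using multiset_partition[of \<nu> "\<lambda>i. i \<noteq> N"] that by (simp add: rest_def filter_eq_replicate_mset)
  have "inj_on rest {\<nu>\<in>M. count \<nu> N = e}"
    by (rule inj_onI) (metis (mono_tags, lifting) rest mem_Collect_eq)
  then have "(\<Sum>\<nu>\<in>M'. c' \<nu> * mprod x \<nu>) = (\<Sum>\<nu>\<in>{\<nu>\<in>M. count \<nu> N = e}. c \<nu> * mprod x (rest \<nu>))" for x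
    unfolding M'_def by (simp add: sum.reindex c'_def rest[symmetric])
  also have "\<dots> x = 0" for x
    unfolding rest_def by (rule sum_mprod_eq_0_slice[OF Suc.prems(1,3)])
  finally have "c' (rest \<mu>) = 0"
    using Suc.IH[of M' c'] Suc.prems by (auto simp: M'_def e_def rest_def less_Suc_eq)
  then show ?case
    using rest[of \<mu>] by (simp add: c'_def e_def)
qed

lemma sum_mprod_eq_0_imp_coeff_eq_0:
  fixes c :: "'k \<Rightarrow> 'a::field_char_0"
  assumes "finite K" "inj_on f K" "\<And>x. (\<Sum>key\<in>K. c key * mprod x (f key)) = 0" "key \<in> K"
  shows "c key = 0"
proof -
  define c' where "c' \<mu> = c (the_inv_into K f \<mu>)" for \<mu>
  have "\<forall>\<mu>\<in>f ` K. \<forall>i\<in>#\<mu>. i < Suc (Max (\<Union>\<mu>\<in>f ` K. set_mset \<mu>))"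
    using assms(1) by (auto simp: less_Suc_eq_le intro!: Max_ge)
  moreover have "(\<Sum>\<mu>\<in>f ` K. c' \<mu> * mprod x \<mu>) = 0" for x
    using assms(3) by (simp add: sum.reindex[OF assms(2)] c'_def the_inv_into_f_f[OF assms(2)])
  ultimately have "c' (f key) = 0"
    using sum_mprod_eq_0_bounded assms(1,4) by blast
  then show ?thesis
    by (simp add: c'_def the_inv_into_f_f[OF assms(2) assms(4)])
qed

lemma nf_keys_map_Yv: "nf_keys d (map Yv is) = [(None, mset is, {#})]"
  by (induction "is") auto

lemma nf_keys_None: "y_indices w = None \<Longrightarrow> key \<in> set (nf_keys d w) \<Longrightarrow> fst key \<noteq> None"
  by (induction w arbitrary: key rule: y_indices.induct) auto

lemma nf_keys_Some_size: "key \<in> set (nf_keys d w) \<Longrightarrow> fst key = Some j \<Longrightarrow> size (snd (snd key)) < d"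
  by (induction d w arbitrary: key rule: nf_keys.induct) (auto split: option.splits)

lemma nf_keys_None_key:
  assumes "key \<in> set (nf_keys d w)" "fst key = None"
  obtains "is" where "w = map Yv is" "key = (None, mset is, {#})"
proof (cases "y_indices w")
  case None
  then show thesis
    using nf_keys_None assms by blast
next
  case (Some vs)
  then show thesis
    using that assms by (auto simp: nf_keys_map_Yv dest: y_indices_Some)
qed

lemma nf_keys_ofD: "key \<in> nf_keys_of d p \<Longrightarrow> \<exists>w\<in>fsupp p. key \<in> set (nf_keys d w)"
  by (auto simp: nf_keys_of_def)

lemma size_nf_key_neq_0:
  assumes "p [] = 0" "key \<in> nf_keys_of d p" "fst key = None"
  shows "size (fst (snd key)) \<noteq> 0"
proof -
  obtain w where w: "w \<in> fsupp p" "key \<in> set (nf_keys d w)"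
    using nf_keys_ofD[OF assms(2)] by blast
  then obtain "is" where "w = map Yv is" "key = (None, mset is, {#})"
    using nf_keys_None_key assms(3) by metis
  then show ?thesis
    using w assms(1) by (auto simp: fsupp_def)
qed

definition even_eval :: "nat \<Rightarrow> (nat \<Rightarrow> 'a::comm_ring_1 poly) \<Rightarrow> var \<Rightarrow> 'a mat" where
  "even_eval m P x = (case x of Yv i \<Rightarrow> even_mat m (P i) | Zv j \<Rightarrow> 0)"

text \<open>In entry \<open>(1, r + 2)\<close>, \<open>y\<^sup>\<mu> [z\<^sub>j\<^sub>0, y\<^sup>\<nu>]\<close> evaluates to \<open>a\<^sup>\<mu> b\<^sup>\<nu>\<close> if \<open>|\<nu>| = r\<close> and to \<open>0\<close>
  otherwise, since each \<open>y\<close> inside the commutator contributes only through its \<open>E'\<close>-part.\<close>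
definition linear_eval :: "nat \<Rightarrow> (nat \<Rightarrow> 'a::comm_ring_1) \<Rightarrow> (nat \<Rightarrow> 'a) \<Rightarrow> nat \<Rightarrow> var \<Rightarrow> 'a mat" where
  "linear_eval m a b j0 x = (case x of Yv i \<Rightarrow> even_mat m [:a i, b i:]
    | Zv j \<Rightarrow> odd_mat m [:if j = j0 then 1 else 0:])"

lemma graded_eval_even_eval: "m \<ge> 2 \<Longrightarrow> graded_eval m (even_eval m P)"
  by (rule graded_evalI[where Q = "\<lambda>_. 0"]) (simp_all add: even_eval_def)

lemma graded_eval_linear_eval: "m \<ge> 2 \<Longrightarrow> graded_eval m (linear_eval m a b j0)"
  by (rule graded_evalI) (simp_all add: linear_eval_def)

lemma meval_word_even_eval_map_Yv:
  "m \<ge> 1 \<Longrightarrow> meval_word m (even_eval m P) (map Yv vs) = even_mat m (prod_list (map P vs))"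
  by (induction vs) (simp_all add: even_eval_def midt_eq_even_mat mmul_even_even)

lemma meval_word_even_eval_eq_0:
  assumes "y_indices w = None"
  shows "meval_word m (even_eval m P) w = 0"
proof -
  obtain vs j rest where "w = map Yv vs @ Zv j # rest"
    using y_indices_None[OF assms] by blast
  then show ?thesis
    by (simp add: meval_word_append even_eval_def)
qed

text \<open>Under \<^const>\<open>even_eval\<close> every \<open>z\<close> goes to \<open>0\<close>, so only the keys \<open>y\<^sup>\<mu>\<close> survive; \<open>c \<mu>\<close> is the
  weight with which \<open>y\<^sup>\<mu>\<close> appears in the entry that is read off: \<open>1\<close> for entry \<open>(1,1)\<close> when
  \<open>y\<^sub>i \<mapsto> a\<^sub>i\<close>, and \<open>|\<mu>|\<close> for entry \<open>(2,3)\<close> when \<open>y\<^sub>i \<mapsto> a\<^sub>i (1 + E')\<close>.\<close>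
definition ykey_value :: "(nat multiset \<Rightarrow> 'a::comm_ring_1) \<Rightarrow> (nat \<Rightarrow> 'a) \<Rightarrow> nf_key \<Rightarrow> 'a" where
  "ykey_value c a key
      = (case fst key of None \<Rightarrow> c (fst (snd key)) * mprod a (fst (snd key)) | Some j \<Rightarrow> 0)"

definition linear_key_value ::
    "(nat \<Rightarrow> 'a::comm_ring_1) \<Rightarrow> (nat \<Rightarrow> 'a) \<Rightarrow> nat \<Rightarrow> nat \<Rightarrow> nf_key \<Rightarrow> 'a" where
  "linear_key_value a b j0 r key = (case fst key of None \<Rightarrow> 0
     | Some j \<Rightarrow> if j = j0 \<and> size (snd (snd key)) = r
         then mprod a (fst (snd key)) * mprod b (snd (snd key)) else 0)"

lemma sum_ykey_value_eq_0:
  assumes "y_indices w = None"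
  shows "sum_list (map (ykey_value c a) (nf_keys d w)) = 0"
proof -
  have "ykey_value c a key = 0" if "key \<in> set (nf_keys d w)" for key
    using nf_keys_None[OF assms that] by (auto simp: ykey_value_def split: option.split)
  then have "map (ykey_value c a) (nf_keys d w) = map (\<lambda>_. 0) (nf_keys d w)"
    by (intro map_cong) auto
  then show ?thesis
    by (metis sum_list_0)
qed

lemma coeff_prod_const: "coeff (prod_list (map (\<lambda>i. [:a i:]) is)) 0 = prod_list (map a is)"
  by (induction "is") simp_all

lemma coeff_prod_shift:
  "coeff (prod_list (map (\<lambda>i. [:a i, a i:]) is)) 0 = prod_list (map a is) \<and>
   coeff (prod_list (map (\<lambda>i. [:a i, a i:]) is)) 1 = of_nat (length is) * prod_list (map a is)"
  for a :: "nat \<Rightarrow> 'a::comm_semiring_1"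
  by (induction "is") (auto simp: coeff_pCons algebra_simps)

lemma coeff_prod_linear:
  fixes a b :: "nat \<Rightarrow> 'a::comm_semiring_1"
  shows "coeff (prod_list (map (\<lambda>i. [:a i, b i:]) vs)) r
    = (\<Sum>p\<leftarrow>filter (\<lambda>p. length (snd p) = r) (splits vs). prod_list (map a (fst p))
        * prod_list (map b (snd p)))"
proof (induction vs arbitrary: r)
  case (Cons y vs)
  then show ?case
    by (cases r) (simp_all add: coeff_pCons filter_map o_def sum_list_const_mult algebra_simps)
qed simp

lemma meval_word_scalar_eval:
  assumes "m \<ge> 1"
  shows "meval_word m (even_eval m (\<lambda>i. [:a i:])) w 0 0
      = sum_list (map (ykey_value (\<lambda>_. 1) a) (nf_keys d w))"
proof (cases "y_indices w")
  case None
  then show ?thesis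
    by (simp add: meval_word_even_eval_eq_0 sum_ykey_value_eq_0)
next
  case (Some vs)
  then have "w = map Yv vs"
    by (rule y_indices_Some)
  then show ?thesis
    using assms
    by (simp add: meval_word_even_eval_map_Yv nf_keys_map_Yv ykey_value_def even_mat_def
        coeff_prod_const mprod_mset)
qed

lemma meval_word_shift_eval:
  assumes "m \<ge> 3"
  shows "meval_word m (even_eval m (\<lambda>i. [:a i, a i:])) w 1 2
    = sum_list (map (ykey_value (\<lambda>\<mu>. of_nat (size \<mu>)) a) (nf_keys d w))"
proof (cases "y_indices w")
  case None
  then show ?thesis
    by (simp add: meval_word_even_eval_eq_0 sum_ykey_value_eq_0)
next
  case (Some vs)
  then have "w = map Yv vs"
    by (rule y_indices_Some)
  then show ?thesis
    using assms coeff_prod_shift[of a vs]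
    by (simp add: meval_word_even_eval_map_Yv nf_keys_map_Yv ykey_value_def even_mat_def
        mprod_mset)
qed

lemma meval_word_linear_eval_zword:
  fixes a b :: "nat \<Rightarrow> 'a::comm_ring_1"
  assumes m: "m \<ge> 2" and r: "r < d" "r + 1 < m"
  shows "meval_word m (linear_eval m a b j0) (Zv j # map Yv vs) 0 (r + 1)
    = sum_list (map (linear_key_value a b j0 r) (nf_keys d (Zv j # map Yv vs)))"
proof -
  define \<delta> :: 'a where "\<delta> = (if j = j0 then 1 else 0)"
  have m1: "m \<ge> 1"
    using m by simp
  have "meval_word m (linear_eval m a b j0) (map Yv vs)
      = even_mat m (prod_list (map (\<lambda>i. [:a i, b i:]) vs))"
    using m1 by (induction vs) (simp_all add: linear_eval_def midt_eq_even_mat mmul_even_even)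
  then have "meval_word m (linear_eval m a b j0) (Zv j # map Yv vs)
      = odd_mat m ([:\<delta>:] * prod_list (map (\<lambda>i. [:a i, b i:]) vs))"
    by (simp add: linear_eval_def mmul_odd_even[OF m1] \<delta>_def)
  then have "meval_word m (linear_eval m a b j0) (Zv j # map Yv vs) 0 (r + 1)
      = \<delta> *
          (\<Sum>p\<leftarrow>filter (\<lambda>p. length (snd p) = r) (splits vs). prod_list (map a (fst p))
              * prod_list (map b (snd p)))"
    using r by (simp add: odd_mat_def coeff_prod_linear)
  also have "\<dots> = (\<Sum>p\<leftarrow>filter (\<lambda>p. length (snd p) < d) (splits vs).
      linear_key_value a b j0 r (Some j, mset (fst p), mset (snd p)))"
    using r
    by (cases "j = j0")
      (auto simp: sum_list_map_filter' \<delta>_def linear_key_value_def mprod_mset intro!: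
          arg_cong[where f = sum_list])
  finally show ?thesis
    by (simp add: y_indices_map_Yv o_def)
qed

lemma meval_word_linear_eval:
  fixes a b :: "nat \<Rightarrow> 'a::comm_ring_1"
  assumes m: "m \<ge> 2" and r: "r < d" "r + 1 < m"
  shows "meval_word m (linear_eval m a b j0) w 0 (r + 1)
      = sum_list (map (linear_key_value a b j0 r) (nf_keys d w))"
proof (induction w)
  case Nil
  then show ?case
    by (simp add: midt_def linear_key_value_def)
next
  case (Cons x w)
  show ?case
  proof (cases x)
    case (Yv i)
    have "meval_word m (linear_eval m a b j0) (x # w) 0 (r + 1)
        = a i * meval_word m (linear_eval m a b j0) w 0 (r + 1)"
      using r by (simp add: Yv linear_eval_def mmul_even_row_0)
    also have "\<dots> = sum_list (map (\<lambda>key. a i * linear_key_value a b j0 r key) (nf_keys d w))"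
      by (subst Cons.IH) (rule sum_list_const_mult[symmetric])
    also have "\<dots> = sum_list (map (linear_key_value a b j0 r) (nf_keys d (x # w)))"
      unfolding Yv nf_keys.simps map_map o_def
      by (intro arg_cong[where f=sum_list] map_cong refl)
        (auto simp: linear_key_value_def mprod_add_mset mult_ac split: option.split)
    finally show ?thesis .
  next
    case (Zv j)
    show ?thesis
    proof (cases "y_indices w")
      case None
      then obtain vs j' rest where w: "w = map Yv vs @ Zv j' # rest"
        using y_indices_None by blast
      have "meval_word m (linear_eval m a b j0) (x # w) = 0"
        unfolding Zv w by (rule meval_word_two_odd[OF m graded_eval_linear_eval[OF m]])
      then show ?thesis
        using None Zv by simp
    next
      case (Some vs)
      then show ?thesis
        using Zv y_indices_Some meval_word_linear_eval_zword[OF assms] by blast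
    qed
  qed
qed

lemma meval_nf_regroup:
  assumes p: "p \<in> fpolys" and h: "\<And>w. meval_word m \<phi> w i j = sum_list (map g (nf_keys d w))"
  shows "meval m \<phi> p i j = (\<Sum>key\<in>nf_keys_of d p. nf_coeff d p key * g key)"
  unfolding meval_def h by (rule sum_nf_keys_regroup[OF p])

lemma nf_coeff_None_eq_0:
  fixes p :: "'a::field_char_0 fpoly"
  assumes p: "p \<in> fpolys" and key: "fst key = None"
    and h: "\<And>a. (\<Sum>key'\<in>nf_keys_of d p. nf_coeff d p key' * ykey_value c a key') = 0"
  shows "nf_coeff d p key * c (fst (snd key)) = 0"
proof (cases "key \<in> nf_keys_of d p")
  case True
  define K0 where "K0 = {key' \<in> nf_keys_of d p. fst key' = None}"
  have K0: "key' = (None, fst (snd key'), {#})" if key': "key' \<in> K0" for key'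
  proof -
    obtain w where "key' \<in> set (nf_keys d w)" "fst key' = None"
      using key' nf_keys_ofD unfolding K0_def by blast
    then obtain "is" where "key' = (None, mset is, {#})"
      by (rule nf_keys_None_key)
    then show ?thesis
      by simp
  qed
  have inj: "inj_on (\<lambda>key'. fst (snd key')) K0"
    by (rule inj_onI) (metis K0)
  have "(\<Sum>key'\<in>K0. (nf_coeff d p key' * c (fst (snd key'))) * mprod a (fst (snd key'))) = 0" for a
  proof -
    have "(\<Sum>key'\<in>K0. (nf_coeff d p key' * c (fst (snd key'))) * mprod a (fst (snd key')))
        = (\<Sum>key'\<in>K0. nf_coeff d p key' * ykey_value c a key')"
      by (intro sum.cong refl) (simp add: K0_def ykey_value_def mult.assoc)
    also have "\<dots> = (\<Sum>key'\<in>nf_keys_of d p. nf_coeff d p key' * ykey_value c a key')"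
      using finite_nf_keys_of[OF p]
      by (intro sum.mono_neutral_left) (auto simp: K0_def ykey_value_def split: option.split)
    finally show ?thesis
      using h by simp
  qed
  moreover have "finite K0"
    using finite_nf_keys_of[OF p] by (simp add: K0_def)
  ultimately show ?thesis
    using sum_mprod_eq_0_imp_coeff_eq_0[OF _ inj,
        where c = "\<lambda>key'. nf_coeff d p key' * c (fst (snd key'))"] True key
    by (simp add: K0_def)
qed (simp add: nf_coeff_eq_0)

text \<open>Packs \<open>(\<mu>, \<nu>)\<close> into one multiset, so that \<open>a\<^sup>\<mu> b\<^sup>\<nu>\<close> becomes a single monomial \<open>x\<^sup>c\<close> with
  \<open>a i = x (2 i)\<close> and \<open>b i = x (2 i + 1)\<close>.\<close>
definition key_code :: "nf_key \<Rightarrow> nat multiset" where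
  "key_code key
      = image_mset (\<lambda>i. 2 * i) (fst (snd key)) + image_mset (\<lambda>i. Suc (2 * i)) (snd (snd key))"

lemma key_code_even: "image_mset (\<lambda>i. i div 2) (filter_mset even (key_code key)) = fst (snd key)"
  by (simp add: key_code_def filter_mset_image_mset o_def image_mset.compositionality)

lemma key_code_odd: "image_mset (\<lambda>i. i div 2) (filter_mset odd (key_code key)) = snd (snd key)"
  by (simp add: key_code_def filter_mset_image_mset o_def image_mset.compositionality)

lemma mprod_key_code:
  "mprod x (key_code key)
    = mprod (\<lambda>i. x (2 * i)) (fst (snd key)) * mprod (\<lambda>i. x (Suc (2 * i))) (snd (snd key))"
  by (simp add: mprod_def key_code_def image_mset.compositionality o_def)

lemma nf_coeff_Some_eq_0:
  fixes p :: "'a::field_char_0 fpoly"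
  assumes p: "p \<in> fpolys" and key: "fst key = Some j0"
    and h: "\<And>a b r. r < d
        \<Longrightarrow> (\<Sum>key'\<in>nf_keys_of d p. nf_coeff d p key' * linear_key_value a b j0 r key') = 0"
  shows "nf_coeff d p key = 0"
proof (cases "key \<in> nf_keys_of d p")
  case True
  define r where "r = size (snd (snd key))"
  have r: "r < d"
    using True key nf_keys_Some_size nf_keys_ofD unfolding r_def by blast
  define K1 where "K1 = {key' \<in> nf_keys_of d p. fst key' = Some j0 \<and> size (snd (snd key')) = r}"
  have inj: "inj_on key_code K1"
  proof (rule inj_onI)
    fix k1 k2
    assume k: "k1 \<in> K1" "k2 \<in> K1" "key_code k1 = key_code k2"
    then have "fst (snd k1) = fst (snd k2)" "snd (snd k1) = snd (snd k2)"
      by (metis key_code_even, metis key_code_odd)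
    moreover have "fst k1 = fst k2"
      using k by (simp add: K1_def)
    ultimately show "k1 = k2"
      by (simp add: prod_eq_iff)
  qed
  have "finite K1"
    using finite_nf_keys_of[OF p] by (simp add: K1_def)
  moreover have "(\<Sum>key'\<in>K1. nf_coeff d p key' * mprod x (key_code key')) = 0" for x
  proof -
    have "(\<Sum>key'\<in>K1. nf_coeff d p key' * mprod x (key_code key'))
        = (\<Sum>key'\<in>K1. nf_coeff d p key'
            * linear_key_value (\<lambda>i. x (2 * i)) (\<lambda>i. x (Suc (2 * i))) j0 r key')"
      by (intro sum.cong refl) (auto simp: K1_def linear_key_value_def mprod_key_code)
    also have "\<dots> = (\<Sum>key'\<in>nf_keys_of d p.
        nf_coeff d p key' * linear_key_value (\<lambda>i. x (2 * i)) (\<lambda>i. x (Suc (2 * i))) j0 r key')"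
      using finite_nf_keys_of[OF p]
      by (intro sum.mono_neutral_left) (auto simp: K1_def linear_key_value_def split: option.split)
    finally show ?thesis
      using h[OF r] by simp
  qed
  moreover have "key \<in> K1"
    using True key by (simp add: K1_def r_def)
  ultimately show ?thesis
    by (rule sum_mprod_eq_0_imp_coeff_eq_0[OF _ inj])
qed (simp add: nf_coeff_eq_0)

lemma nf_coeff_IdN_eq_0:
  fixes p :: "'a::field_char_0 fpoly"
  assumes d: "d \<ge> 1" and p: "p \<in> IdN (Suc d)"
  shows "nf_coeff d p key = 0"
proof -
  have m: "Suc d \<ge> 2"
    using d by simp
  have p: "p \<in> fpolys" and vanish: "\<And>\<phi>. graded_eval (Suc d) \<phi> \<Longrightarrow> meval (Suc d) \<phi> p = 0"
    using p by (auto simp: IdN_def zero_fun_def)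
  show ?thesis
  proof (cases "fst key")
    case None
    have "(\<Sum>key'\<in>nf_keys_of d p. nf_coeff d p key' * ykey_value (\<lambda>_. 1) a key')
        = meval (Suc d) (even_eval (Suc d) (\<lambda>i. [:a i:])) p 0 0" for a
      by (rule meval_nf_regroup[OF p meval_word_scalar_eval, symmetric]) simp
    then have "(\<Sum>key'\<in>nf_keys_of d p. nf_coeff d p key' * ykey_value (\<lambda>_. 1) a key') = 0" for a
      using vanish[OF graded_eval_even_eval[OF m]] by simp
    from nf_coeff_None_eq_0[OF p None this] show ?thesis
      by simp
  next
    case (Some j)
    have "(\<Sum>key'\<in>nf_keys_of d p. nf_coeff d p key' * linear_key_value a b j r key') = 0"
      if "r < d" for a b r
      using meval_nf_regroup[OF p meval_word_linear_eval[OF m that]]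
        vanish[OF graded_eval_linear_eval[OF m]] that
      by simp
    then show ?thesis
      by (rule nf_coeff_Some_eq_0[OF p Some])
  qed
qed

lemma nf_coeff_CN_eq_0:
  fixes p :: "'a::field_char_0 fpoly"
  assumes d: "d \<ge> 1" and p: "p \<in> CN (Suc (Suc d))"
  shows "nf_coeff d p key = 0"
proof -
  have m: "Suc (Suc d) \<ge> 3" "Suc (Suc d) \<ge> 2"
    using d by simp_all
  have p: "p \<in> fpolys" and p0: "p [] = 0"
    and central: "\<And>\<phi>. graded_eval (Suc (Suc d)) \<phi> \<Longrightarrow> meval (Suc (Suc d)) \<phi> p \<in> Ncenter (Suc (Suc d))"
    using p by (auto simp: CN_def)
  show ?thesis
  proof (cases "key \<in> nf_keys_of d p")
    case True
    show ?thesis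
    proof (cases "fst key")
      case None
      have "(\<Sum>key'\<in>nf_keys_of d p. nf_coeff d p key' * ykey_value (\<lambda>\<mu>. of_nat (size \<mu>)) a key')
          = meval (Suc (Suc d)) (even_eval (Suc (Suc d)) (\<lambda>i. [:a i, a i:])) p 1 2" for a
        by (rule meval_nf_regroup[OF p meval_word_shift_eval[OF m(1)], symmetric])
      then have
        "(\<Sum>key'\<in>nf_keys_of d p. nf_coeff d p key' * ykey_value (\<lambda>\<mu>. of_nat (size \<mu>)) a key') = 0"
        for a
        using Ncenter_entries(1)[OF m(1) central[OF graded_eval_even_eval[OF m(2)]]] by simp
      from nf_coeff_None_eq_0[OF p None this] show ?thesis
        using size_nf_key_neq_0[OF p0 True None] by simp
    next
      case (Some j)
      have "(\<Sum>key'\<in>nf_keys_of d p. nf_coeff d p key' * linear_key_value a b j r key') = 0"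
        if "r < d" for a b r
        using meval_nf_regroup[OF p meval_word_linear_eval[OF m(2) that]]
          Ncenter_entries(2)[OF m(1) central[OF graded_eval_linear_eval[OF m(2)]], of "r + 1"] that
        by simp
      then show ?thesis
        by (rule nf_coeff_Some_eq_0[OF p Some])
    qed
  qed (rule nf_coeff_eq_0)
qed

theorem theorem3p7:
  fixes k :: nat
  assumes "k \<ge> 3"
  shows "(CN k :: 'a::field_char_0 fpoly set) = IdN (k - 1)
       \<and> (IdN (k - 1) :: 'a fpoly set) =
          T2_ideal {fcomm (fvar (Yv 1)) (fvar (Yv 2)),
                    fcomm_list (fvar (Zv 0)) (map (\<lambda>i. fvar (Yv i)) [1..<k - 1]),
                    fmul (fvar (Zv 1)) (fvar (Zv 2))}"
proof -
  define d where "d = k - 2"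
  have d: "d \<ge> 1" and k: "k - 1 = Suc d" "k = Suc (Suc d)"
    using assms by (simp_all add: d_def)
  interpret T: T2_closed_gens "T2_ideal (T2_gens d) :: 'a fpoly set" d
    by unfold_locales (simp_all add: T2_closed_T2_ideal T2_gens_fpolys subset_T2_ideal)
  have "IdN (Suc d) = T2_ideal (T2_gens d :: 'a fpoly set)"
    using T.mem_if_nf_coeff_eq_0 nf_coeff_IdN_eq_0[OF d] T2_ideal_gens_subset_IdN[OF d]
    unfolding IdN_def by blast
  moreover have "CN (Suc (Suc d)) = T2_ideal (T2_gens d :: 'a fpoly set)"
    using T.mem_if_nf_coeff_eq_0 nf_coeff_CN_eq_0[OF d] T2_ideal_gens_subset_CN[of d]
    unfolding CN_def by blast
  ultimately show ?thesis
    by (simp add: k T2_gens_def del: upt_Suc)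
qed

end
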